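(* Let $k$ be a field of characteristic $0$. Let $B=\prod_{i=1}^r k[s_i]/(s_i^{n_i})$ be graded by giving each $s_i$ some positive degree $d_i$, and let $A=k\oplus A_1\oplus A_2\oplus\cdots$ be a graded $k$-subalgebra of $B$ (a subalgebra spanned by homogeneous elements, with $A_0=k$ and $A_n$ its homogeneous elements of degree $n$). If $A$ is not a principal ideal algebra, then the induced map $\Omega_{A/k}\to\Omega_{B/k}$ is not injective.
   Context: A principal ideal algebra is a finite-dimensional commutative $k$-algebra in which every ideal is principal. *)

theory Defs
  imports "HOL-Computational_Algebra.Polynomial"
begin

text \<open>An element is a function
  b :: nat => 'k poly with b i the (reduced) polynomial in s_i for i < r and b i = 0 for i >= r.
  Reduction modulo s_i^(n i) is "mod monom 1 (n i)" (i.e. truncation).\<close>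

type_synonym 'k elt = "nat \<Rightarrow> 'k poly"

definition Bset :: "nat \<Rightarrow> (nat \<Rightarrow> nat) \<Rightarrow> ('k::field) elt set" where
  "Bset r n = {b. (\<forall>i<r. b i mod monom 1 (n i) = b i) \<and> (\<forall>i\<ge>r. b i = 0)}"

definition bzero :: "('k::field) elt" where "bzero = (\<lambda>i. 0)"

definition bone :: "nat \<Rightarrow> (nat \<Rightarrow> nat) \<Rightarrow> ('k::field) elt" where
  "bone r n = (\<lambda>i. if i < r then 1 mod monom 1 (n i) else 0)"

definition badd :: "('k::field) elt \<Rightarrow> 'k elt \<Rightarrow> 'k elt" where
  "badd b c = (\<lambda>i. b i + c i)"

definition bsub :: "('k::field) elt \<Rightarrow> 'k elt \<Rightarrow> 'k elt" where
  "bsub b c = (\<lambda>i. b i - c i)"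

definition bmul :: "(nat \<Rightarrow> nat) \<Rightarrow> ('k::field) elt \<Rightarrow> 'k elt \<Rightarrow> 'k elt" where
  "bmul n b c = (\<lambda>i. (b i * c i) mod monom 1 (n i))"

definition bscal :: "'k::field \<Rightarrow> 'k elt \<Rightarrow> 'k elt" where
  "bscal c b = (\<lambda>i. smult c (b i))"

definition homog :: "nat \<Rightarrow> (nat \<Rightarrow> nat) \<Rightarrow> (nat \<Rightarrow> nat) \<Rightarrow> nat \<Rightarrow> ('k::field) elt \<Rightarrow> bool" where
  "homog r n d m b \<longleftrightarrow> b \<in> Bset r n \<and> (\<forall>i<r. \<forall>j. coeff (b i) j \<noteq> 0 \<longrightarrow> j * d i = m)"

definition subalg :: "nat \<Rightarrow> (nat \<Rightarrow> nat) \<Rightarrow> ('k::field) elt set \<Rightarrow> bool" where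
  "subalg r n A \<longleftrightarrow> A \<subseteq> Bset r n \<and> bone r n \<in> A
     \<and> (\<forall>a\<in>A. \<forall>b\<in>A. badd a b \<in> A)
     \<and> (\<forall>a\<in>A. \<forall>b\<in>A. bmul n a b \<in> A)
     \<and> (\<forall>c. \<forall>a\<in>A. bscal c a \<in> A)"

definition graded_subalg :: "nat \<Rightarrow> (nat \<Rightarrow> nat) \<Rightarrow> (nat \<Rightarrow> nat) \<Rightarrow> ('k::field) elt set \<Rightarrow> bool" where
  "graded_subalg r n d A \<longleftrightarrow> subalg r n A
     \<and> (\<forall>a\<in>A. \<exists>hs. set hs \<subseteq> A \<and> (\<forall>h\<in>set hs. \<exists>m. homog r n d m h)
                   \<and> a = foldr badd hs bzero)
     \<and> {a\<in>A. homog r n d 0 a} = {bscal c (bone r n) | c. True}"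

definition is_ideal :: "(nat \<Rightarrow> nat) \<Rightarrow> ('k::field) elt set \<Rightarrow> 'k elt set \<Rightarrow> bool" where
  "is_ideal n A I \<longleftrightarrow> I \<subseteq> A \<and> bzero \<in> I \<and> (\<forall>x\<in>I. \<forall>y\<in>I. badd x y \<in> I)
     \<and> (\<forall>a\<in>A. \<forall>x\<in>I. bmul n a x \<in> I)"

definition principal_ideal_alg :: "(nat \<Rightarrow> nat) \<Rightarrow> ('k::field) elt set \<Rightarrow> bool" where
  "principal_ideal_alg n A \<longleftrightarrow>
     (\<forall>I. is_ideal n A I \<longrightarrow> (\<exists>x\<in>A. I = {bmul n a x | a. a \<in> A}))"

text \<open>The free S-module on symbols dc (c in S):
  f :: 'k elt => 'k elt, f c = coefficient of dc, finitely supported, coefficients in S,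
  supported on S.  Omega_{S/k} = free S / krel S.\<close>

definition free_mod :: "('k::field) elt set \<Rightarrow> ('k elt \<Rightarrow> 'k elt) set" where
  "free_mod S = {f. (\<forall>x. f x \<in> S) \<and> (\<forall>x. x \<notin> S \<longrightarrow> f x = bzero) \<and> finite {x. f x \<noteq> bzero}}"

definition gen :: "nat \<Rightarrow> (nat \<Rightarrow> nat) \<Rightarrow> ('k::field) elt \<Rightarrow> ('k elt \<Rightarrow> 'k elt)" where
  "gen r n c = (\<lambda>x. if x = c then bone r n else bzero)"

definition fadd :: "(('k::field) elt \<Rightarrow> 'k elt) \<Rightarrow> ('k elt \<Rightarrow> 'k elt) \<Rightarrow> ('k elt \<Rightarrow> 'k elt)" where
  "fadd f g = (\<lambda>x. badd (f x) (g x))"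

definition fsub :: "(('k::field) elt \<Rightarrow> 'k elt) \<Rightarrow> ('k elt \<Rightarrow> 'k elt) \<Rightarrow> ('k elt \<Rightarrow> 'k elt)" where
  "fsub f g = (\<lambda>x. bsub (f x) (g x))"

definition fsmul :: "(nat \<Rightarrow> nat) \<Rightarrow> ('k::field) elt \<Rightarrow> ('k elt \<Rightarrow> 'k elt) \<Rightarrow> ('k elt \<Rightarrow> 'k elt)" where
  "fsmul n s f = (\<lambda>x. bmul n s (f x))"

inductive_set krel :: "nat \<Rightarrow> (nat \<Rightarrow> nat) \<Rightarrow> ('k::field) elt set \<Rightarrow> ('k elt \<Rightarrow> 'k elt) set"
  for r n S where
  zero: "(\<lambda>x. bzero) \<in> krel r n S"
| add: "f \<in> krel r n S \<Longrightarrow> g \<in> krel r n S \<Longrightarrow> fadd f g \<in> krel r n S"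
| smul: "s \<in> S \<Longrightarrow> f \<in> krel r n S \<Longrightarrow> fsmul n s f \<in> krel r n S"
| additive: "a \<in> S \<Longrightarrow> c \<in> S \<Longrightarrow>
     fsub (gen r n (badd a c)) (fadd (gen r n a) (gen r n c)) \<in> krel r n S"
| leibniz: "a \<in> S \<Longrightarrow> c \<in> S \<Longrightarrow>
     fsub (gen r n (bmul n a c)) (fadd (fsmul n a (gen r n c)) (fsmul n c (gen r n a))) \<in> krel r n S"
| const: "gen r n (bscal l (bone r n)) \<in> krel r n S"

text \<open>The induced map Omega_{A/k} -> Omega_{B/k} (da |-> da) is not injective:
  some element of the free A-module is nonzero modulo the A-relations but zero
  modulo the B-relations.\<close>
definition omega_map_not_injective :: "nat \<Rightarrow> (nat \<Rightarrow> nat) \<Rightarrow> ('k::field) elt set \<Rightarrow> bool" where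
  "omega_map_not_injective r n A \<longleftrightarrow>
     (\<exists>f\<in>free_mod A. f \<notin> krel r n A \<and> f \<in> krel r n (Bset r n))"

end

theory Submission
  imports Defs "HOL-Library.Function_Algebras"
begin

(* Let p be the least positive degree of a nonzero homogeneous element x of A, and q the least
   positive degree of a homogeneous element y of A outside the ideal A x.  If there is no such y,
   then A = k + A x with x nilpotent, so A is local with principal maximal ideal and every ideal is
   generated by a power of x.  Otherwise consider omega = q y dx - p x dy.  In Omega_B it vanishes:
   expanding x and y in the monomials s_i^j, every monomial of x (resp. y) has j d_i = p (resp. q),
   so q y dx and p x dy have the same expansion in the ds_i (Euler's identity).  In Omega_A it does
   not: let eps be the augmentation, alpha the coefficient of a fixed monomial of x, pi the projection
   onto degree q and W = pi (A x).  By minimality of p and q, alpha is an eps-derivation A -> k and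
   pi is an eps-derivation A -> B/W, and the pairing  u dz |-> alpha u pi z - alpha z pi u  kills
   all relations of Omega_A modulo W.  It maps omega to -(p + q) y, which is not in W since pi (A x) is
   contained in A x and p + q is invertible in characteristic 0. *)

lemma coeff_mod_monom:
  fixes P :: "'k::field poly"
  shows "coeff (P mod monom 1 N) j = (if j < N then coeff P j else 0)"
proof -
  let ?R = "P mod monom 1 N"
  have "monom 1 N dvd (P - ?R)"
    by (simp add: mod_eq_dvd_iff[symmetric])
  hence low: "\<forall>k<N. coeff P k = coeff ?R k" unfolding monom_1_dvd_iff' by simp
  have high: "coeff ?R j = 0" if "N \<le> j"
  proof (cases "?R = 0")
    case False
    have "degree ?R < degree (monom (1::'k) N)"
      using degree_mod_less[of "monom (1::'k) N" P] False by auto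
    then show ?thesis using that by (intro coeff_eq_0) (simp add: degree_monom_eq)
  qed simp
  show ?thesis using low high by (auto simp: not_less)
qed

lemma smult_sum_right: "smult k (sum f S) = (\<Sum>x\<in>S. smult k (f x))"
  by (induction S rule: infinite_finite_induct) (simp_all add: smult_add_right)

lemma sum_apply: "sum f S i = (\<Sum>x\<in>S. f x i)"
  by (induction S rule: infinite_finite_induct) auto

subsection \<open>The algebra B\<close>

lemma badd_eq: "badd a b = a + b" by (auto simp: badd_def fun_eq_iff)
lemma bsub_eq: "bsub a b = a - b" by (auto simp: bsub_def fun_eq_iff)
lemma bzero_eq: "bzero = 0" by (auto simp: bzero_def fun_eq_iff)
lemma fadd_eq: "fadd f g = f + g" by (auto simp: fadd_def badd_def fun_eq_iff)
lemma fsub_eq: "fsub f g = f - g" by (auto simp: fsub_def bsub_def fun_eq_iff)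

lemma Bset_iff: "b \<in> Bset r n \<longleftrightarrow> (\<forall>i<r. b i mod monom 1 (n i) = b i) \<and> (\<forall>i\<ge>r. b i = 0)"
  by (simp add: Bset_def)

lemma coeff_bmul: "coeff (bmul n u v i) j = (if j < n i then coeff (u i * v i) j else 0)"
  by (simp add: bmul_def coeff_mod_monom)

lemma bmul_comm: "bmul n a b = bmul n b a"
  by (simp add: bmul_def mult.commute)
lemma bmul_assoc: "bmul n (bmul n a b) c = bmul n a (bmul n b c)"
  by (simp add: bmul_def fun_eq_iff mod_simps mult.assoc)
lemma bmul_add_left: "bmul n (a + b) c = bmul n a c + bmul n b c"
  by (simp add: bmul_def fun_eq_iff algebra_simps poly_mod_add_left)
lemma bmul_add_right: "bmul n c (a + b) = bmul n c a + bmul n c b"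
  by (simp add: bmul_def fun_eq_iff algebra_simps poly_mod_add_left)
lemma bmul_diff_left: "bmul n (a - b) c = bmul n a c - bmul n b c"
  by (simp add: bmul_def fun_eq_iff algebra_simps poly_mod_diff_left)
lemma bmul_diff_right: "bmul n c (a - b) = bmul n c a - bmul n c b"
  by (simp add: bmul_def fun_eq_iff algebra_simps poly_mod_diff_left)
lemma bmul_minus_left: "bmul n (- a) c = - bmul n a c"
  by (simp add: bmul_def fun_eq_iff)
lemma bmul_zero_left [simp]: "bmul n 0 c = 0"
  by (simp add: bmul_def fun_eq_iff)
lemma bmul_zero_right [simp]: "bmul n c 0 = 0"
  by (simp add: bmul_def fun_eq_iff)
lemma bmul_bscal_left: "bmul n (bscal k a) c = bscal k (bmul n a c)"
  by (simp add: bmul_def bscal_def fun_eq_iff mod_smult_left)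
lemma bmul_bscal_right: "bmul n c (bscal k a) = bscal k (bmul n c a)"
  by (simp add: bmul_def bscal_def fun_eq_iff mod_smult_left)

lemma bscal_add: "bscal k (a + b) = bscal k a + bscal k b"
  by (simp add: bscal_def fun_eq_iff smult_add_right)
lemma bscal_diff: "bscal k (a - b) = bscal k a - bscal k b"
  by (simp add: bscal_def fun_eq_iff smult_diff_right)
lemma bscal_add_left: "bscal (k + l) a = bscal k a + bscal l a"
  by (simp add: bscal_def fun_eq_iff smult_add_left)
lemma bscal_zero [simp]: "bscal k 0 = 0" "bscal 0 a = 0"
  by (simp_all add: bscal_def fun_eq_iff)
lemma bscal_one [simp]: "bscal 1 a = a"
  by (simp add: bscal_def fun_eq_iff)
lemma bscal_bscal: "bscal k (bscal l a) = bscal (k * l) a"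
  by (simp add: bscal_def fun_eq_iff)
lemma bscal_neg1: "bscal (-1) a = - a"
  by (simp add: bscal_def fun_eq_iff)
lemma bscal_sum: "bscal k (sum f S) = (\<Sum>x\<in>S. bscal k (f x))"
  by (simp add: fun_eq_iff bscal_def sum_apply smult_sum_right)
lemma bscal_sum_left: "bscal (\<Sum>z\<in>S. f z) v = (\<Sum>z\<in>S. bscal (f z) v)"
  by (induction S rule: infinite_finite_induct) (simp_all add: bscal_add_left)

lemma Bset_bmul: "bmul n a b \<in> Bset r n" if "a \<in> Bset r n" "b \<in> Bset r n"
  using that by (auto simp: Bset_iff bmul_def)
lemma Bset_add: "a + b \<in> Bset r n" if "a \<in> Bset r n" "b \<in> Bset r n"
  using that by (auto simp: Bset_iff poly_mod_add_left)
lemma Bset_diff: "a - b \<in> Bset r n" if "a \<in> Bset r n" "b \<in> Bset r n"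
  using that by (auto simp: Bset_iff poly_mod_diff_left)
lemma Bset_minus: "- a \<in> Bset r n" if "a \<in> Bset r n"
  using that by (auto simp: Bset_iff)
lemma Bset_bscal: "bscal k a \<in> Bset r n" if "a \<in> Bset r n"
  using that by (auto simp: Bset_iff bscal_def mod_smult_left)
lemma Bset_zero [simp]: "0 \<in> Bset r n"
  by (auto simp: Bset_iff)
lemma Bset_bone [simp]: "bone r n \<in> Bset r n"
  by (auto simp: Bset_iff bone_def)
lemma Bset_sum: "(\<And>x. x \<in> S \<Longrightarrow> f x \<in> Bset r n) \<Longrightarrow> sum f S \<in> Bset r n"
  by (induction S rule: infinite_finite_induct) (auto intro: Bset_add)

lemma bmul_bone_left: "a \<in> Bset r n \<Longrightarrow> bmul n (bone r n) a = a"
  by (auto simp: Bset_iff bmul_def bone_def fun_eq_iff mod_simps)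
lemma bmul_bone_right: "a \<in> Bset r n \<Longrightarrow> bmul n a (bone r n) = a"
  by (subst bmul_comm) (rule bmul_bone_left)
lemma bscal_eq_bmul_bone: "a \<in> Bset r n \<Longrightarrow> bscal k a = bmul n (bscal k (bone r n)) a"
  by (simp add: bmul_bscal_left bmul_bone_left)

lemma bmul_bone_plus:
  assumes "a \<in> Bset r n" "b \<in> Bset r n"
  shows "bmul n (bscal ca (bone r n) + a) (bscal cb (bone r n) + b)
       = bscal (ca * cb) (bone r n) + bscal ca b + bscal cb a + bmul n a b"
proof -
  have "bmul n (bscal ca (bone r n)) (bscal cb (bone r n)) = bscal (ca * cb) (bone r n)"
    by (simp add: bmul_bscal_left bmul_bscal_right bmul_bone_left bscal_bscal mult.commute)
  moreover have "bmul n (bscal ca (bone r n)) b = bscal ca b"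
    using assms by (simp add: bmul_bscal_left bmul_bone_left)
  moreover have "bmul n a (bscal cb (bone r n)) = bscal cb a"
    using assms by (simp add: bmul_bscal_right bmul_bone_right)
  ultimately show ?thesis
    by (simp only: bmul_add_left bmul_add_right add_ac)
qed

definition bpow :: "nat \<Rightarrow> (nat \<Rightarrow> nat) \<Rightarrow> ('k::field) elt \<Rightarrow> nat \<Rightarrow> 'k elt" where
  "bpow r n z k = ((bmul n z) ^^ k) (bone r n)"

lemma bpow_0 [simp]: "bpow r n z 0 = bone r n" by (simp add: bpow_def)
lemma bpow_Suc: "bpow r n z (Suc k) = bmul n z (bpow r n z k)" by (simp add: bpow_def)

lemma Bset_bpow: "z \<in> Bset r n \<Longrightarrow> bpow r n z k \<in> Bset r n"
  by (induction k) (auto simp: bpow_Suc intro: Bset_bmul)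

definition geom_sum :: "nat \<Rightarrow> (nat \<Rightarrow> nat) \<Rightarrow> ('k::field) elt \<Rightarrow> nat \<Rightarrow> 'k elt" where
  "geom_sum r n z k = ((\<lambda>g. bone r n + bmul n z g) ^^ k) 0"

lemma geom_sum_0 [simp]: "geom_sum r n z 0 = 0" by (simp add: geom_sum_def)
lemma geom_sum_Suc: "geom_sum r n z (Suc k) = bone r n + bmul n z (geom_sum r n z k)"
  by (simp add: geom_sum_def)

lemma geom_sum_bmul_one_minus:
  assumes "z \<in> Bset r n"
  shows "bmul n (geom_sum r n z k) (bone r n - z) = bone r n - bpow r n z k"
proof (induction k)
  case 0 then show ?case by (simp add: fun_eq_iff bmul_def)
next
  case (Suc k)
  have "bmul n (geom_sum r n z (Suc k)) (bone r n - z)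
     = (bone r n - z) + bmul n z (bmul n (geom_sum r n z k) (bone r n - z))"
    using assms by (simp add: geom_sum_Suc bmul_add_left bmul_assoc bmul_bone_left Bset_diff)
  also have "\<dots> = (bone r n - z) + bmul n z (bone r n - bpow r n z k)"
    by (simp only: Suc.IH)
  also have "\<dots> = bone r n - bpow r n z (Suc k)"
    using assms by (simp add: bmul_diff_right bmul_bone_right bpow_Suc)
  finally show ?case .
qed

subsection \<open>The degree filtration and homogeneous components\<close>

definition deg_ge :: "nat \<Rightarrow> (nat \<Rightarrow> nat) \<Rightarrow> nat \<Rightarrow> ('k::field) elt \<Rightarrow> bool" where
  "deg_ge r d m w \<longleftrightarrow> (\<forall>i<r. \<forall>j. coeff (w i) j \<noteq> 0 \<longrightarrow> m \<le> j * d i)"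

lemma exists_coeff_product_nonzero:
  fixes u v :: "'k::field poly"
  assumes "coeff (u * v) j \<noteq> 0"
  obtains l where "l \<le> j" "coeff u l \<noteq> 0" "coeff v (j - l) \<noteq> 0"
proof -
  have "(\<Sum>l\<le>j. coeff u l * coeff v (j - l)) \<noteq> 0" using assms by (simp add: coeff_mult)
  then obtain l where "l \<le> j" "coeff u l * coeff v (j - l) \<noteq> 0"
    by (metis (no_types, lifting) atMost_iff sum.not_neutral_contains_not_neutral)
  then show ?thesis using that by simp
qed

lemma deg_ge_bmul:
  assumes "deg_ge r d a u" "deg_ge r d b v"
  shows "deg_ge r d (a + b) (bmul n u v)"
  unfolding deg_ge_def
proof (intro allI impI)
  fix i j assume i: "i < r" and nz: "coeff (bmul n u v i) j \<noteq> 0"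
  hence "coeff (u i * v i) j \<noteq> 0" by (simp add: coeff_bmul split: if_splits)
  then obtain l where l: "l \<le> j" "coeff (u i) l \<noteq> 0" "coeff (v i) (j - l) \<noteq> 0"
    by (rule exists_coeff_product_nonzero)
  hence "a \<le> l * d i" "b \<le> (j - l) * d i" using assms i by (auto simp: deg_ge_def)
  moreover have "l * d i + (j - l) * d i = j * d i" using l(1) by (simp add: add_mult_distrib[symmetric])
  ultimately show "a + b \<le> j * d i" by linarith
qed

lemma deg_ge_0: "deg_ge r d 0 w" by (simp add: deg_ge_def)
lemma deg_ge_mono: "deg_ge r d m w \<Longrightarrow> m' \<le> m \<Longrightarrow> deg_ge r d m' w" by (force simp: deg_ge_def)
lemma deg_ge_add: "deg_ge r d m u \<Longrightarrow> deg_ge r d m v \<Longrightarrow> deg_ge r d m (u + v)"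
  unfolding deg_ge_def by (metis add.right_neutral coeff_add plus_fun_apply)
lemma deg_ge_bscal: "deg_ge r d m u \<Longrightarrow> deg_ge r d m (bscal c u)"
  by (auto simp: deg_ge_def bscal_def)
lemma deg_ge_zero [simp]: "deg_ge r d m 0" by (simp add: deg_ge_def)
lemma deg_ge_homog: "homog r n d m w \<Longrightarrow> deg_ge r d m w"
  by (auto simp: deg_ge_def homog_def)

lemma deg_ge_bpow: "deg_ge r d 1 z \<Longrightarrow> deg_ge r d k (bpow r n z k)"
proof (induction k)
  case 0 then show ?case by (simp add: deg_ge_0)
next
  case (Suc k)
  then show ?case using deg_ge_bmul[of r d 1 z k "bpow r n z k" n] by (simp add: bpow_Suc)
qed

lemma deg_ge_Bset_eq_0:
  assumes "w \<in> Bset r n" "deg_ge r d M w" "\<forall>i<r. n i * d i \<le> M" "\<forall>i<r. 0 < d i"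
  shows "w = 0"
proof -
  have "w i = 0" for i
  proof (cases "i < r")
    case True
    have "coeff (w i) j = 0" for j
    proof (rule ccontr)
      assume nz: "coeff (w i) j \<noteq> 0"
      have "w i = w i mod monom 1 (n i)" using assms(1) True by (simp add: Bset_iff)
      hence "j < n i" using nz by (metis coeff_mod_monom)
      hence "j * d i < n i * d i" using assms(4) True by simp
      moreover have "M \<le> j * d i" using assms(2) True nz by (auto simp: deg_ge_def)
      moreover have "n i * d i \<le> M" using assms(3) True by simp
      ultimately show False by linarith
    qed
    then show ?thesis by (intro poly_eqI) simp
  next
    case False then show ?thesis using assms(1) unfolding Bset_iff by simp
  qed
  then show ?thesis by (intro ext) simp
qed

lemma homog_Bset: "homog r n d m h \<Longrightarrow> h \<in> Bset r n" by (simp add: homog_def)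

lemma homog_bmul:
  assumes "homog r n d a u" "homog r n d b v"
  shows "homog r n d (a + b) (bmul n u v)"
  unfolding homog_def
proof (intro conjI allI impI)
  show "bmul n u v \<in> Bset r n" using assms by (intro Bset_bmul homog_Bset)
  fix i j assume i: "i < r" and nz: "coeff (bmul n u v i) j \<noteq> 0"
  hence "coeff (u i * v i) j \<noteq> 0" by (simp add: coeff_bmul split: if_splits)
  then obtain l where l: "l \<le> j" "coeff (u i) l \<noteq> 0" "coeff (v i) (j - l) \<noteq> 0"
    by (rule exists_coeff_product_nonzero)
  hence "l * d i = a" "(j - l) * d i = b" using assms i by (auto simp: homog_def)
  moreover have "l * d i + (j - l) * d i = j * d i" using l(1) by (simp add: add_mult_distrib[symmetric])
  ultimately show "j * d i = a + b" by linarith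
qed

definition hcomp :: "(nat \<Rightarrow> nat) \<Rightarrow> nat \<Rightarrow> ('k::field) elt \<Rightarrow> 'k elt" where
  "hcomp d m w = (\<lambda>i. if 0 < d i \<and> d i dvd m then monom (coeff (w i) (m div d i)) (m div d i) else 0)"

lemma coeff_hcomp:
  assumes "0 < d i"
  shows "coeff (hcomp d m w i) j = (if j * d i = m then coeff (w i) j else 0)"
proof (cases "d i dvd m")
  case True
  then obtain t where m: "m = d i * t" by blast
  have "(j * d i = m) = (j = t)" using assms m by (simp add: mult.commute)
  then show ?thesis using assms True m by (auto simp: hcomp_def coeff_monom)
next
  case False
  hence "j * d i \<noteq> m" by (metis dvd_triv_right)
  then show ?thesis using False by (simp add: hcomp_def)
qed

lemma hcomp_add: "hcomp d m (u + v) = hcomp d m u + hcomp d m v"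
  by (auto simp: hcomp_def fun_eq_iff add_monom)
lemma hcomp_bscal: "hcomp d m (bscal c u) = bscal c (hcomp d m u)"
  by (auto simp: hcomp_def fun_eq_iff bscal_def smult_monom)
lemma hcomp_zero [simp]: "hcomp d m 0 = 0"
  by (auto simp: hcomp_def fun_eq_iff)

lemma hcomp_homog:
  assumes "homog r n d m' h" "\<forall>i<r. 0 < d i"
  shows "hcomp d m h = (if m = m' then h else 0)"
proof (rule ext)
  fix i
  show "hcomp d m h i = (if m = m' then h else 0) i"
  proof (cases "i < r")
    case True
    have "coeff (hcomp d m h i) j = coeff ((if m = m' then h else 0) i) j" for j
      using assms True by (auto simp: coeff_hcomp homog_def)
    then show ?thesis by (intro poly_eqI)
  next
    case False
    hence "h i = 0" using assms(1) by (simp add: homog_def Bset_iff)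
    then show ?thesis by (simp add: hcomp_def)
  qed
qed

lemma hcomp_deg_ge_Suc:
  assumes "deg_ge r d (Suc m) w" "w \<in> Bset r n" "\<forall>i<r. 0 < d i"
  shows "hcomp d m w = 0"
proof (rule ext)
  fix i
  show "hcomp d m w i = 0 i"
  proof (cases "i < r")
    case True
    have "coeff (hcomp d m w i) j = 0" for j
      using assms True by (fastforce simp: coeff_hcomp deg_ge_def)
    then show ?thesis by (simp add: poly_eqI)
  next
    case False
    hence "w i = 0" using assms(2) by (simp add: Bset_iff)
    then show ?thesis by (simp add: hcomp_def)
  qed
qed

lemma hcomp_bone:
  assumes "0 < m" "\<forall>i<r. 0 < d i"
  shows "hcomp d m (bone r n) = 0"
proof (rule ext)
  fix i
  show "hcomp d m (bone r n) i = 0 i"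
  proof (cases "i < r")
    case True
    have "j * d i = m \<Longrightarrow> j \<noteq> 0" for j using assms by auto
    then have "coeff (hcomp d m (bone r n) i) j = 0" for j
      using assms True by (auto simp: coeff_hcomp bone_def coeff_mod_monom)
    then have "hcomp d m (bone r n) i = 0" by (intro poly_eqI) simp
    then show ?thesis by simp
  next
    case False
    then show ?thesis by (simp add: hcomp_def bone_def)
  qed
qed

subsection \<open>Graded subalgebras and principal ideals\<close>

locale graded_alg =
  fixes r :: nat and n d :: "nat \<Rightarrow> nat" and A :: "('k::field_char_0) elt set"
  assumes n_pos: "\<And>i. i < r \<Longrightarrow> 1 \<le> n i" and d_pos: "\<And>i. i < r \<Longrightarrow> 0 < d i"
    and graded: "graded_subalg r n d A"
begin

lemma subalg: "subalg r n A" using graded by (simp add: graded_subalg_def)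
lemma A_Bset: "a \<in> A \<Longrightarrow> a \<in> Bset r n" using subalg by (auto simp: subalg_def)
lemma A_one: "bone r n \<in> A" using subalg by (auto simp: subalg_def)
lemma A_add: "a \<in> A \<Longrightarrow> b \<in> A \<Longrightarrow> a + b \<in> A" using subalg by (auto simp: subalg_def badd_eq)
lemma A_mul: "a \<in> A \<Longrightarrow> b \<in> A \<Longrightarrow> bmul n a b \<in> A" using subalg by (auto simp: subalg_def)
lemma A_scal: "a \<in> A \<Longrightarrow> bscal c a \<in> A" using subalg by (auto simp: subalg_def)
lemma A_zero: "0 \<in> A" using A_scal[OF A_one, of 0] by simp
lemma A_minus: "a \<in> A \<Longrightarrow> - a \<in> A" using A_scal[of a "-1"] by (simp add: bscal_neg1)
lemma A_diff: "a \<in> A \<Longrightarrow> b \<in> A \<Longrightarrow> a - b \<in> A"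
  using A_add[of a "- b"] A_minus[of b] by simp
lemma A_bpow: "z \<in> A \<Longrightarrow> bpow r n z k \<in> A"
  by (induction k) (auto simp: bpow_Suc intro: A_mul A_one)
lemma A_geom_sum: "z \<in> A \<Longrightarrow> geom_sum r n z k \<in> A"
  by (induction k) (auto simp: geom_sum_Suc intro: A_mul A_one A_add A_zero)

lemma graded_induct [consumes 1, case_names zero add homog]:
  assumes "a \<in> A" and "Q 0" and "\<And>u v. Q u \<Longrightarrow> Q v \<Longrightarrow> Q (u + v)"
    and "\<And>h m. h \<in> A \<Longrightarrow> homog r n d m h \<Longrightarrow> Q h"
  shows "Q a"
proof -
  obtain hs where hs: "set hs \<subseteq> A" "\<forall>h\<in>set hs. \<exists>m. homog r n d m h" "a = foldr badd hs bzero"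
    using graded assms(1) unfolding graded_subalg_def by blast
  have "Q (foldr badd hs bzero)" using hs(1,2)
    by (induction hs) (use assms(2-4) in \<open>auto simp: badd_eq bzero_eq\<close>)
  then show ?thesis using hs(3) by simp
qed

lemma d_pos_all: "\<forall>i<r. 0 < d i" using d_pos by blast

lemma homog_0_scalar: "h \<in> A \<Longrightarrow> homog r n d 0 h \<Longrightarrow> \<exists>c. h = bscal c (bone r n)"
  using graded unfolding graded_subalg_def by blast

definition top_degree :: nat where "top_degree = (\<Sum>i<r. n i * d i)"

lemma bpow_top_degree_eq_0: "z \<in> Bset r n \<Longrightarrow> deg_ge r d 1 z \<Longrightarrow> bpow r n z top_degree = 0"
proof (rule deg_ge_Bset_eq_0[of _ _ _ d top_degree])
  show "\<forall>i<r. n i * d i \<le> top_degree"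
    unfolding top_degree_def by (auto intro: member_le_sum)
qed (auto intro: Bset_bpow deg_ge_bpow d_pos)

lemma unit_plus_multiple_invertible:
  assumes "x \<in> A" "deg_ge r d 1 x" "w \<in> A" "c \<noteq> 0"
  shows "\<exists>v\<in>A. bmul n v (bscal c (bone r n) + bmul n w x) = bone r n"
proof -
  define z where "z = bscal (- 1 / c) (bmul n w x)"
  have zA: "z \<in> A" unfolding z_def by (intro A_scal A_mul assms)
  have zB: "z \<in> Bset r n" using zA A_Bset by blast
  have "deg_ge r d (0 + 1) (bmul n w x)" by (rule deg_ge_bmul[OF deg_ge_0 assms(2)])
  hence z_deg: "deg_ge r d 1 z" unfolding z_def by (simp add: deg_ge_bscal)
  have u: "bscal c (bone r n) + bmul n w x = bscal c (bone r n - z)"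
    using assms(4) by (simp add: z_def bscal_diff bscal_bscal bscal_neg1)
  define v where "v = bscal (1 / c) (geom_sum r n z top_degree)"
  have "bmul n v (bscal c (bone r n) + bmul n w x)
      = bscal c (bscal (1/c) (bmul n (geom_sum r n z top_degree) (bone r n - z)))"
    unfolding u v_def by (simp only: bmul_bscal_left bmul_bscal_right)
  also have "\<dots> = bone r n"
    using assms(4) by (simp add: bscal_bscal geom_sum_bmul_one_minus[OF zB]
        bpow_top_degree_eq_0[OF zB z_deg])
  finally show ?thesis using zA by (intro bexI[of _ v]) (auto simp: v_def intro: A_scal A_geom_sum)
qed

definition multiples :: "'k elt \<Rightarrow> 'k elt set" where "multiples x = {bmul n a x | a. a \<in> A}"

lemma multiples_0: "0 \<in> multiples x" unfolding multiples_def using A_zero by force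
lemma multiples_zero: "multiples 0 = {0}"
  unfolding multiples_def using A_zero by auto
lemma multiples_add: "u \<in> multiples x \<Longrightarrow> v \<in> multiples x \<Longrightarrow> u + v \<in> multiples x"
  unfolding multiples_def by (force simp: bmul_add_left[symmetric] intro: A_add)
lemma multiples_bscal: "u \<in> multiples x \<Longrightarrow> bscal c u \<in> multiples x"
  unfolding multiples_def by (force simp: bmul_bscal_left[symmetric] intro: A_scal)

lemma multiples_self: "x \<in> A \<Longrightarrow> x \<in> multiples x"
  unfolding multiples_def using A_one A_Bset bmul_bone_left by force
lemma multiples_A: "x \<in> A \<Longrightarrow> u \<in> multiples x \<Longrightarrow> u \<in> A"
  unfolding multiples_def using A_mul by blast
lemma multiples_bmul:
  assumes "x \<in> A" "u \<in> multiples x" "b \<in> A"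
  shows "bmul n u b \<in> multiples x"
proof -
  obtain a where a: "a \<in> A" "u = bmul n a x" using assms(2) unfolding multiples_def by blast
  have "bmul n u b = bmul n (bmul n a b) x"
    unfolding a(2) by (metis bmul_assoc bmul_comm)
  then show ?thesis unfolding multiples_def using a(1) assms(3) A_mul by blast
qed

lemma gen_A: "gen r n c z \<in> A" by (simp add: gen_def bzero_eq A_one A_zero)

text \<open>An element of I outside A x^(k+1) has the form (c + w x) x^k with c nonzero, and c + w x is a
  unit.\<close>

lemma ideal_eq_multiples_bpow:
  assumes xA: "x \<in> A" and x_deg: "deg_ge r d 1 x"
    and decomp: "\<forall>a\<in>A. \<exists>c w. w \<in> A \<and> a = bscal c (bone r n) + bmul n w x"
    and I: "is_ideal n A I" and sub: "I \<subseteq> multiples (bpow r n x k)"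
    and not_sub: "\<not> I \<subseteq> multiples (bpow r n x (Suc k))"
  shows "I = multiples (bpow r n x k)"
proof
  have I_mul: "\<And>a y. a \<in> A \<Longrightarrow> y \<in> I \<Longrightarrow> bmul n a y \<in> I" using I by (auto simp: is_ideal_def)
  from not_sub obtain a where aI: "a \<in> I" and a_not: "a \<notin> multiples (bpow r n x (Suc k))"
    by blast
  from sub aI obtain u where uA: "u \<in> A" and au: "a = bmul n u (bpow r n x k)"
    unfolding multiples_def by blast
  from decomp uA obtain c w where wA: "w \<in> A" and uw: "u = bscal c (bone r n) + bmul n w x"
    by blast
  have "c \<noteq> 0"
  proof
    assume "c = 0"
    hence "a = bmul n w (bpow r n x (Suc k))" by (simp add: au uw bmul_assoc bpow_Suc)
    with a_not wA show False unfolding multiples_def by blast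
  qed
  then obtain v where vA: "v \<in> A" and vu: "bmul n v u = bone r n"
    using unit_plus_multiple_invertible[OF xA x_deg wA] uw by blast
  have "bmul n v a = bpow r n x k"
    using xA A_Bset by (simp add: au bmul_assoc[symmetric] vu bmul_bone_left Bset_bpow)
  hence "bpow r n x k \<in> I" using I_mul[OF vA aI] by simp
  then show "multiples (bpow r n x k) \<subseteq> I" unfolding multiples_def using I_mul by blast
qed (rule sub)

text \<open>Every ideal I is generated by x^k for the largest k with I contained in A x^k.\<close>

lemma principal_ideal_alg_if_scalar_plus_multiples:
  assumes xA: "x \<in> A" and x_deg: "deg_ge r d 1 x"
    and decomp: "\<forall>a\<in>A. \<exists>c w. w \<in> A \<and> a = bscal c (bone r n) + bmul n w x"
  shows "principal_ideal_alg n A"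
  unfolding principal_ideal_alg_def multiples_def[symmetric]
proof (intro allI impI)
  fix I assume I: "is_ideal n A I"
  define K where "K = {k. I \<subseteq> multiples (bpow r n x k)}"
  have "0 \<in> K" unfolding K_def multiples_def mem_Collect_eq
  proof
    fix y assume "y \<in> I"
    then have "y \<in> A" using I by (auto simp: is_ideal_def)
    moreover from this have "y = bmul n y (bpow r n x 0)" using A_Bset by (simp add: bmul_bone_right)
    ultimately show "y \<in> {bmul n a (bpow r n x 0) |a. a \<in> A}" by blast
  qed
  show "\<exists>g\<in>A. I = multiples g"
  proof (cases "top_degree \<in> K")
    case True
    have "I = multiples 0"
      using True I A_zero A_Bset[OF xA] bpow_top_degree_eq_0[OF _ x_deg]
      by (auto simp: K_def multiples_def is_ideal_def bzero_eq)
    then show ?thesis using A_zero by blast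
  next
    case False
    obtain k where "k \<in> K" "Suc k \<notin> K"
    proof (rule ccontr)
      assume "\<not> thesis"
      hence "k \<in> K" for k using that \<open>0 \<in> K\<close> by (induction k) auto
      with False show False by blast
    qed
    then have "I = multiples (bpow r n x k)"
      using ideal_eq_multiples_bpow[OF xA x_deg decomp I] unfolding K_def by blast
    then show ?thesis using A_bpow[OF xA] by blast
  qed
qed

lemma principal_ideal_alg_if_homog_multiples:
  assumes xA: "x \<in> A" and x_deg: "deg_ge r d 1 x"
    and homog_mult: "\<And>m h. 0 < m \<Longrightarrow> h \<in> A \<Longrightarrow> homog r n d m h \<Longrightarrow> h \<in> multiples x"
  shows "principal_ideal_alg n A"
proof (rule principal_ideal_alg_if_scalar_plus_multiples[OF xA x_deg], intro ballI)
  fix a assume "a \<in> A"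
  then show "\<exists>c w. w \<in> A \<and> a = bscal c (bone r n) + bmul n w x"
  proof (induction rule: graded_induct)
    case zero
    have "(0::'k elt) = bscal 0 (bone r n) + bmul n 0 x" by simp
    then show ?case using A_zero by blast
  next
    case (add u v)
    then obtain c1 w1 c2 w2 where "w1 \<in> A" "u = bscal c1 (bone r n) + bmul n w1 x"
      "w2 \<in> A" "v = bscal c2 (bone r n) + bmul n w2 x" by blast
    moreover have "bscal c1 (bone r n) + bmul n w1 x + (bscal c2 (bone r n) + bmul n w2 x)
      = bscal (c1 + c2) (bone r n) + bmul n (w1 + w2) x"
      by (simp add: bscal_add_left bmul_add_left algebra_simps)
    ultimately show ?case using A_add by blast
  next
    case (homog h m)
    show ?case
    proof (cases "m = 0")
      case True
      then obtain c where "h = bscal c (bone r n)" using homog_0_scalar homog by blast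
      then have "h = bscal c (bone r n) + bmul n 0 x" by simp
      then show ?thesis using A_zero by blast
    next
      case False
      then have "h \<in> multiples x" using homog_mult homog by simp
      then obtain w where "w \<in> A" "h = bmul n w x" unfolding multiples_def by blast
      then have "w \<in> A \<and> h = bscal 0 (bone r n) + bmul n w x" by simp
      then show ?thesis by blast
    qed
  qed
qed

end

subsection \<open>The minimal pair x, y\<close>

locale minimal_pair = graded_alg +
  fixes p q :: nat and x y :: "'a elt"
  assumes p_pos: "0 < p" and xA: "x \<in> A" and x_homog: "homog r n d p x" and x_nonzero: "x \<noteq> 0"
    and p_min: "\<And>m h. 0 < m \<Longrightarrow> m < p \<Longrightarrow> h \<in> A \<Longrightarrow> homog r n d m h \<Longrightarrow> h = 0"
    and q_pos: "0 < q" and yA: "y \<in> A" and y_homog: "homog r n d q y"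
    and y_not_multiple: "y \<notin> multiples x"
    and q_min: "\<And>m h. 0 < m \<Longrightarrow> m < q \<Longrightarrow> h \<in> A \<Longrightarrow> homog r n d m h \<Longrightarrow> h \<in> multiples x"
begin

lemma p_le_q: "p \<le> q"
proof (rule ccontr)
  assume "\<not> p \<le> q"
  then have "y = 0" using p_min[OF q_pos _ yA y_homog] by simp
  then show False using y_not_multiple multiples_0 by blast
qed

lemma r_pos: "0 < r"
proof (rule ccontr)
  assume "\<not> 0 < r"
  hence "y = 0" using y_homog by (auto simp: homog_def Bset_iff fun_eq_iff)
  thus False using y_not_multiple multiples_0 by blast
qed

lemma decompose:
  assumes "a \<in> A"
  shows "\<exists>c u v. a = bscal c (bone r n) + u + v \<and> u \<in> multiples x \<and> deg_ge r d p u
    \<and> deg_ge r d q v"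
  using assms
proof (induction rule: graded_induct)
  case zero
  have "(0::'a elt) = bscal 0 (bone r n) + 0 + 0" by simp
  then show ?case using multiples_0 deg_ge_zero by blast
next
  case (add a b)
  then obtain c1 u1 v1 c2 u2 v2 where
    "a = bscal c1 (bone r n) + u1 + v1" "u1 \<in> multiples x" "deg_ge r d p u1" "deg_ge r d q v1"
    "b = bscal c2 (bone r n) + u2 + v2" "u2 \<in> multiples x" "deg_ge r d p u2" "deg_ge r d q v2"
    by blast
  moreover have "bscal c1 (bone r n) + u1 + v1 + (bscal c2 (bone r n) + u2 + v2)
     = bscal (c1 + c2) (bone r n) + (u1 + u2) + (v1 + v2)"
    by (simp add: bscal_add_left algebra_simps)
  ultimately show ?case by (metis multiples_add deg_ge_add)
next
  case (homog h m)
  consider "m = 0" | "0 < m" "m < q" | "q \<le> m" by linarith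
  then show ?case
  proof cases
    case 1
    then obtain c where "h = bscal c (bone r n) + 0 + 0" using homog_0_scalar homog by auto
    then show ?thesis using multiples_0 deg_ge_zero by blast
  next
    case 2
    have "deg_ge r d p h"
    proof (cases "m < p")
      case True
      then show ?thesis using p_min[of m h] 2 homog by simp
    next
      case False
      then show ?thesis using deg_ge_homog[OF homog(2)] deg_ge_mono by (simp add: not_less)
    qed
    moreover have "h = bscal 0 (bone r n) + h + 0" by simp
    ultimately show ?thesis using q_min[of m h] 2 homog deg_ge_zero by blast
  next
    case 3
    have "h = bscal 0 (bone r n) + 0 + h" by simp
    then show ?thesis using deg_ge_homog[OF homog(2)] deg_ge_mono[OF _ 3] multiples_0 deg_ge_zero
      by blast
  qed
qed

definition aug :: "'a elt \<Rightarrow> 'a" where "aug w = coeff (w 0) 0"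

lemma aug_add: "aug (u + v) = aug u + aug v" by (simp add: aug_def)
lemma aug_zero [simp]: "aug 0 = 0" by (simp add: aug_def)
lemma aug_bscal: "aug (bscal c u) = c * aug u" by (simp add: aug_def bscal_def)

lemma n_0_pos: "1 \<le> n 0" using n_pos r_pos by blast

lemma aug_bone: "aug (bone r n) = 1"
  using r_pos n_0_pos by (simp add: aug_def bone_def coeff_mod_monom)

lemma aug_bmul: "aug (bmul n u v) = aug u * aug v"
  using n_0_pos by (simp add: aug_def coeff_bmul coeff_mult_0)

lemma aug_deg_ge_Suc: "deg_ge r d (Suc m) w \<Longrightarrow> aug w = 0"
  using r_pos unfolding deg_ge_def aug_def by fastforce

definition x_mon :: "nat \<times> nat" where
  "x_mon = (SOME ij. fst ij < r \<and> coeff (x (fst ij)) (snd ij) \<noteq> 0)"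

lemma x_mon: "fst x_mon < r \<and> coeff (x (fst x_mon)) (snd x_mon) \<noteq> 0"
proof -
  obtain i where i: "x i \<noteq> 0" using x_nonzero by (auto simp: fun_eq_iff)
  have ir: "i < r" using i x_homog unfolding homog_def Bset_iff by (meson not_less)
  obtain j where "coeff (x i) j \<noteq> 0" using i poly_eqI[of "x i" 0] by auto
  hence "\<exists>ij. fst ij < r \<and> coeff (x (fst ij)) (snd ij) \<noteq> 0" using ir by (intro exI[of _ "(i, j)"]) simp
  then show ?thesis unfolding x_mon_def by (rule someI_ex)
qed

lemma x_mon_degree: "snd x_mon * d (fst x_mon) = p"
  using x_mon x_homog by (auto simp: homog_def)

definition xcoeff :: "'a elt \<Rightarrow> 'a" where
  "xcoeff w = coeff (w (fst x_mon)) (snd x_mon) / coeff (x (fst x_mon)) (snd x_mon)"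

lemma xcoeff_add: "xcoeff (u + v) = xcoeff u + xcoeff v" by (simp add: xcoeff_def add_divide_distrib)
lemma xcoeff_zero [simp]: "xcoeff 0 = 0" by (simp add: xcoeff_def)
lemma xcoeff_bscal: "xcoeff (bscal c u) = c * xcoeff u" by (simp add: xcoeff_def bscal_def)
lemma xcoeff_x: "xcoeff x = 1" using x_mon by (simp add: xcoeff_def)
lemma xcoeff_bone: "xcoeff (bone r n) = 0"
proof -
  have "snd x_mon \<noteq> 0" using x_mon_degree p_pos by (metis mult_0 less_irrefl)
  then show ?thesis using x_mon by (simp add: xcoeff_def bone_def coeff_mod_monom)
qed
lemma xcoeff_deg_ge_Suc: "deg_ge r d (Suc p) w \<Longrightarrow> xcoeff w = 0"
  using x_mon x_mon_degree unfolding deg_ge_def xcoeff_def by fastforce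

definition W :: "'a elt set" where "W = hcomp d q ` multiples x"

lemma W_0: "0 \<in> W" unfolding W_def using multiples_0 by (metis image_eqI hcomp_zero)
lemma W_add: "u \<in> W \<Longrightarrow> v \<in> W \<Longrightarrow> u + v \<in> W"
  unfolding W_def by (auto simp: hcomp_add[symmetric] intro!: imageI multiples_add)
lemma W_bscal: "u \<in> W \<Longrightarrow> bscal c u \<in> W"
  unfolding W_def by (auto simp: hcomp_bscal[symmetric] intro!: imageI multiples_bscal)
lemma W_minus: "u \<in> W \<Longrightarrow> - u \<in> W"
  using W_bscal[of u "-1"] by (simp add: bscal_neg1)
lemma W_diff: "u \<in> W \<Longrightarrow> v \<in> W \<Longrightarrow> u - v \<in> W"
  using W_add[of u "- v"] W_minus[of v] by simp
lemma W_sum: "(\<And>z. z \<in> S \<Longrightarrow> f z \<in> W) \<Longrightarrow> sum f S \<in> W"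
  by (induction S rule: infinite_finite_induct) (auto intro: W_add W_0)

lemma hcomp_q_bone: "hcomp d q (bone r n) = 0"
  using q_pos d_pos_all by (rule hcomp_bone)

lemma hcomp_q_multiple:
  assumes "w \<in> multiples x"
  shows "hcomp d q w \<in> multiples x"
proof -
  obtain b where b: "b \<in> A" "w = bmul n b x" using assms unfolding multiples_def by blast
  have "hcomp d q (bmul n b x) \<in> multiples x" using b(1)
  proof (induction rule: graded_induct)
    case zero show ?case using multiples_0 by (simp only: bmul_zero_left hcomp_zero)
  next
    case (add u v) then show ?case by (metis bmul_add_left hcomp_add multiples_add)
  next
    case (homog h m)
    have "homog r n d (m + p) (bmul n h x)" using homog(2) x_homog by (rule homog_bmul)
    hence "hcomp d q (bmul n h x) = (if q = m + p then bmul n h x else 0)"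
      using d_pos_all by (rule hcomp_homog)
    moreover have "bmul n h x \<in> multiples x" using homog(1) unfolding multiples_def by blast
    ultimately show ?case using multiples_0 by simp
  qed
  then show ?thesis using b(2) by simp
qed

lemma y_notin_W: "y \<notin> W"
proof
  assume "y \<in> W"
  then obtain w where "w \<in> multiples x" "y = hcomp d q w" unfolding W_def by blast
  then show False using hcomp_q_multiple y_not_multiple by simp
qed

lemma decompose_aug:
  assumes "a \<in> A"
  obtains c u v where "a = bscal c (bone r n) + (u + v)" "aug a = c" "u \<in> multiples x"
    "deg_ge r d p u" "deg_ge r d q v" "u \<in> Bset r n" "v \<in> Bset r n" "deg_ge r d p (u + v)"
proof -
  obtain c u v where a: "a = bscal c (bone r n) + u + v" "u \<in> multiples x" "deg_ge r d p u"
    "deg_ge r d q v"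
    using decompose[OF assms] by blast
  have uB: "u \<in> Bset r n" using multiples_A[OF xA a(2)] A_Bset by blast
  have "v = a - bscal c (bone r n) - u" using a(1) by simp
  hence vB: "v \<in> Bset r n" using uB assms A_Bset by (auto intro!: Bset_diff Bset_bscal)
  have deg_p: "deg_ge r d p (u + v)" using a(3,4) p_le_q by (intro deg_ge_add) (auto intro: deg_ge_mono)
  have "deg_ge r d (Suc 0) (u + v)" using deg_p p_pos deg_ge_mono by fastforce
  hence "aug a = c" using a(1) aug_deg_ge_Suc[of 0 "u + v"]
    by (simp add: aug_add aug_bscal aug_bone add.assoc)
  then show ?thesis using that a uB vB deg_p by (simp add: add.assoc)
qed

text \<open>Write a = c + u + v as in decompose.  Products of positive-degree parts have degree at least
  2 p > p and, except for u u' (which lies in A x), at least p + q > q.\<close>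

lemma xcoeff_bmul:
  assumes "a \<in> A" "b \<in> A"
  shows "xcoeff (bmul n a b) = aug a * xcoeff b + aug b * xcoeff a"
proof -
  obtain ca ua va where a: "a = bscal ca (bone r n) + (ua + va)" "aug a = ca"
    "ua \<in> Bset r n" "va \<in> Bset r n" "deg_ge r d p (ua + va)"
    using decompose_aug[OF assms(1)] by metis
  obtain cb ub vb where b: "b = bscal cb (bone r n) + (ub + vb)" "aug b = cb"
    "ub \<in> Bset r n" "vb \<in> Bset r n" "deg_ge r d p (ub + vb)"
    using decompose_aug[OF assms(2)] by metis
  have B: "ua + va \<in> Bset r n" "ub + vb \<in> Bset r n" using a b by (auto intro: Bset_add)
  have "deg_ge r d (p + p) (bmul n (ua + va) (ub + vb))" using a(5) b(5) by (rule deg_ge_bmul)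
  hence "xcoeff (bmul n (ua + va) (ub + vb)) = 0"
    using p_pos by (intro xcoeff_deg_ge_Suc) (auto intro: deg_ge_mono)
  then show ?thesis
    unfolding a(2) b(2) unfolding a(1) b(1) bmul_bone_plus[OF B]
    by (simp add: xcoeff_add xcoeff_bscal xcoeff_bone)
qed

lemma hcomp_bmul:
  assumes "a \<in> A" "b \<in> A"
  shows "hcomp d q (bmul n a b) - bscal (aug a) (hcomp d q b) - bscal (aug b) (hcomp d q a) \<in> W"
proof -
  obtain ca ua va where a: "a = bscal ca (bone r n) + (ua + va)" "aug a = ca"
    "ua \<in> Bset r n" "va \<in> Bset r n" "ua \<in> multiples x" "deg_ge r d p ua" "deg_ge r d q va"
    using decompose_aug[OF assms(1)] by metis
  obtain cb ub vb where b: "b = bscal cb (bone r n) + (ub + vb)" "aug b = cb"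
    "ub \<in> Bset r n" "vb \<in> Bset r n" "ub \<in> multiples x" "deg_ge r d p ub" "deg_ge r d q vb"
    using decompose_aug[OF assms(2)] by metis
  have B: "ua + va \<in> Bset r n" "ub + vb \<in> Bset r n" using a b by (auto intro: Bset_add)
  have vanish: "hcomp d q (bmul n u v) = 0"
    if "deg_ge r d k u" "deg_ge r d l v" "q < k + l" "u \<in> Bset r n" "v \<in> Bset r n" for u v k l
    using deg_ge_bmul[OF that(1,2), of n] that(3-5) d_pos_all
    by (intro hcomp_deg_ge_Suc[of r d q _ n]) (auto intro: deg_ge_mono Bset_bmul)
  have "hcomp d q (bmul n ua vb) = 0" "hcomp d q (bmul n va ub) = 0" "hcomp d q (bmul n va vb) = 0"
    using a b p_pos q_pos by (auto intro!: vanish)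
  then have "hcomp d q (bmul n a b) - bscal (aug a) (hcomp d q b) - bscal (aug b) (hcomp d q a)
      = hcomp d q (bmul n ua ub)"
    unfolding a(2) b(2) unfolding a(1) b(1) bmul_bone_plus[OF B]
    by (simp add: hcomp_add hcomp_bscal hcomp_q_bone bmul_add_left bmul_add_right bscal_add)
  then show ?thesis
    unfolding W_def using multiples_bmul[OF xA a(5) multiples_A[OF xA b(5)]] by simp
qed

end

subsection \<open>Additive functionals on the free module\<close>

definition supp :: "('a \<Rightarrow> 'b::zero) \<Rightarrow> 'a set" where "supp f = {z. f z \<noteq> 0}"

text \<open>An element f of the free module stands for the sum of the f z dz; free_ext G is the additive
  extension of u dz to G u z.\<close>

definition free_ext :: "('k::field elt \<Rightarrow> 'k elt \<Rightarrow> 'b::ab_group_add) \<Rightarrow> ('k elt \<Rightarrow> 'k elt) \<Rightarrow> 'b" where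
  "free_ext G f = (\<Sum>z\<in>supp f. G (f z) z)"

lemma free_ext_superset:
  assumes "finite S" "supp f \<subseteq> S" "\<And>z. G 0 z = 0"
  shows "free_ext G f = (\<Sum>z\<in>S. G (f z) z)"
  unfolding free_ext_def using assms by (intro sum.mono_neutral_left) (auto simp: supp_def)

lemma supp_add: "supp (f + g) \<subseteq> supp f \<union> supp g" for f g :: "'k::field elt \<Rightarrow> 'k elt"
  by (auto simp: supp_def)
lemma supp_minus: "supp (- f) = supp f" for f :: "'k::field elt \<Rightarrow> 'k elt"
  by (auto simp: supp_def)
lemma supp_diff: "supp (f - g) \<subseteq> supp f \<union> supp g" for f g :: "'k::field elt \<Rightarrow> 'k elt"
  by (auto simp: supp_def)
lemma supp_gen: "supp (gen r n c) \<subseteq> {c}" by (auto simp: supp_def gen_def bzero_eq)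
lemma supp_fsmul: "supp (fsmul n s f) \<subseteq> supp f" by (auto simp: supp_def fsmul_def bzero_eq)
lemma finite_supp_gen: "finite (supp (gen r n c))"
  using supp_gen[of r n c] by (rule finite_subset) simp
lemma finite_supp_fsmul_gen: "finite (supp (fsmul n s (gen r n c)))"
  by (rule finite_subset[OF supp_fsmul finite_supp_gen])

locale left_additive =
  fixes G :: "'k::field elt \<Rightarrow> 'k elt \<Rightarrow> 'b::ab_group_add"
  assumes G_zero: "G 0 z = 0" and G_add: "G (u + v) z = G u z + G v z"
begin

lemma G_minus: "G (- u) z = - G u z"
  using G_add[of u "- u" z] G_zero[of z] by (metis add.commute eq_neg_iff_add_eq_0 add.right_inverse)

lemma free_ext_add:
  assumes "finite (supp f)" "finite (supp g)"
  shows "free_ext G (f + g) = free_ext G f + free_ext G g"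
proof -
  let ?S = "supp f \<union> supp g"
  have "free_ext G (f + g) = (\<Sum>z\<in>?S. G ((f + g) z) z)"
    using assms supp_add[of f g] G_zero by (intro free_ext_superset) auto
  also have "\<dots> = (\<Sum>z\<in>?S. G (f z) z) + (\<Sum>z\<in>?S. G (g z) z)"
    by (simp add: G_add sum.distrib)
  also have "\<dots> = free_ext G f + free_ext G g"
    using assms G_zero by (simp add: free_ext_superset[symmetric])
  finally show ?thesis .
qed

lemma free_ext_minus: "free_ext G (- f) = - free_ext G f"
  unfolding free_ext_def supp_minus by (simp add: G_minus sum_negf)

lemma free_ext_diff:
  assumes "finite (supp f)" "finite (supp g)"
  shows "free_ext G (f - g) = free_ext G f - free_ext G g"
  using free_ext_add[of f "- g"] assms free_ext_minus[of g] by (simp add: supp_minus)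

lemma free_ext_fsmul_gen: "free_ext G (fsmul n s (gen r n c)) = G (bmul n s (bone r n)) c"
proof -
  have "free_ext G (fsmul n s (gen r n c)) = (\<Sum>z\<in>{c}. G (fsmul n s (gen r n c) z) z)"
    using supp_fsmul[of n s "gen r n c"] supp_gen[of r n c] G_zero by (intro free_ext_superset) auto
  then show ?thesis by (simp add: fsmul_def gen_def)
qed

lemma free_ext_gen: "free_ext G (gen r n c) = G (bone r n) c"
proof -
  have "free_ext G (gen r n c) = (\<Sum>z\<in>{c}. G (gen r n c z) z)"
    using supp_gen[of r n c] G_zero by (intro free_ext_superset) auto
  then show ?thesis by (simp add: gen_def)
qed

lemma free_ext_fsmul:
  "finite (supp f) \<Longrightarrow> free_ext G (fsmul n s f) = (\<Sum>z\<in>supp f. G (bmul n s (f z)) z)"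
  using supp_fsmul[of n s f] G_zero by (subst free_ext_superset[of "supp f"]) (auto simp: fsmul_def)

end

subsection \<open>Derivations of A and a pairing on Omega_A\<close>

context minimal_pair begin

definition dalpha :: "'a elt \<Rightarrow> 'a elt \<Rightarrow> 'a" where "dalpha u z = aug u * xcoeff z"
definition dpi :: "'a elt \<Rightarrow> 'a elt \<Rightarrow> 'a elt" where "dpi u z = bscal (aug u) (hcomp d q z)"
definition pairing :: "'a elt \<Rightarrow> 'a elt \<Rightarrow> 'a elt" where
  "pairing u z = bscal (xcoeff u) (hcomp d q z) - bscal (xcoeff z) (hcomp d q u)"

lemma dalpha_additive: "left_additive dalpha"
  by unfold_locales (simp_all add: dalpha_def aug_add algebra_simps)
lemma dpi_additive: "left_additive dpi"
  by unfold_locales (simp_all add: dpi_def aug_add bscal_add_left)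
lemma pairing_additive: "left_additive pairing"
  by unfold_locales
    (simp_all add: pairing_def xcoeff_add hcomp_add bscal_add_left bscal_add algebra_simps)

definition pairing_inv :: "('a elt \<Rightarrow> 'a elt) \<Rightarrow> bool" where
  "pairing_inv f \<longleftrightarrow> finite (supp f) \<and> (\<forall>z. f z \<in> A) \<and> free_ext dalpha f = 0
     \<and> free_ext dpi f \<in> W \<and> free_ext pairing f \<in> W"

lemma pairing_bmul_left:
  assumes "s \<in> A" "u \<in> A"
  shows "pairing (bmul n s u) z = bscal (aug s) (pairing u z) + bscal (xcoeff s) (dpi u z)
     - bscal (dalpha u z) (hcomp d q s)
     - bscal (xcoeff z) (hcomp d q (bmul n s u) - bscal (aug s) (hcomp d q u) - bscal (aug u) (hcomp d q s))"
proof -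
  define w where "w = hcomp d q (bmul n s u) - bscal (aug s) (hcomp d q u) - bscal (aug u) (hcomp d q s)"
  have "hcomp d q (bmul n s u) = w + bscal (aug s) (hcomp d q u) + bscal (aug u) (hcomp d q s)"
    unfolding w_def by simp
  then have "pairing (bmul n s u) z = bscal (aug s * xcoeff u + aug u * xcoeff s) (hcomp d q z)
       - bscal (xcoeff z) (w + bscal (aug s) (hcomp d q u) + bscal (aug u) (hcomp d q s))"
    unfolding pairing_def xcoeff_bmul[OF assms] by simp
  also have "\<dots> = bscal (aug s) (bscal (xcoeff u) (hcomp d q z) - bscal (xcoeff z) (hcomp d q u))
      + bscal (xcoeff s) (bscal (aug u) (hcomp d q z)) - bscal (aug u * xcoeff z) (hcomp d q s)
      - bscal (xcoeff z) w"
    by (simp add: fun_eq_iff bscal_def smult_add_left smult_add_right smult_diff_right algebra_simps)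
  finally show ?thesis unfolding w_def pairing_def dpi_def dalpha_def .
qed

lemma pairing_inv_zero: "pairing_inv (\<lambda>x. bzero)"
proof -
  have "supp (\<lambda>x::'a elt. bzero :: 'a elt) = {}" by (simp add: supp_def bzero_eq)
  then show ?thesis unfolding pairing_inv_def free_ext_def
    by (simp only: sum.empty finite.emptyI bzero_eq A_zero W_0 simp_thms)
qed

lemma pairing_inv_add:
  assumes "pairing_inv f" "pairing_inv g"
  shows "pairing_inv (fadd f g)"
proof -
  have fin: "finite (supp f)" "finite (supp g)" using assms by (auto simp: pairing_inv_def)
  have "finite (supp (f + g))" using fin supp_add[of f g] finite_subset by blast
  moreover have "(f + g) z \<in> A" for z
    using assms A_add[of "f z" "g z"] by (simp add: pairing_inv_def)
  moreover have "free_ext dalpha (f + g) = 0" "free_ext dpi (f + g) \<in> W"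
    "free_ext pairing (f + g) \<in> W"
    using assms unfolding left_additive.free_ext_add[OF dalpha_additive fin]
      left_additive.free_ext_add[OF dpi_additive fin]
      left_additive.free_ext_add[OF pairing_additive fin]
    by (auto simp: pairing_inv_def intro: W_add)
  ultimately show ?thesis unfolding fadd_eq pairing_inv_def by blast
qed

lemma pairing_inv_fsmul:
  assumes sA: "s \<in> A" and f: "pairing_inv f"
  shows "pairing_inv (fsmul n s f)"
proof -
  have fin: "finite (supp f)" and fA: "\<And>z. f z \<in> A" and inv_alpha: "free_ext dalpha f = 0"
    and inv_pi: "free_ext dpi f \<in> W" and inv_pairing: "free_ext pairing f \<in> W"
    using f by (auto simp: pairing_inv_def)
  define w where "w z = hcomp d q (bmul n s (f z)) - bscal (aug s) (hcomp d q (f z))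
        - bscal (aug (f z)) (hcomp d q s)" for z
  have "free_ext pairing (fsmul n s f) = bscal (aug s) (free_ext pairing f)
       + bscal (xcoeff s) (free_ext dpi f) - bscal (free_ext dalpha f) (hcomp d q s)
       - (\<Sum>z\<in>supp f. bscal (xcoeff z) (w z))"
    unfolding left_additive.free_ext_fsmul[OF pairing_additive fin] pairing_bmul_left[OF sA fA]
      w_def[symmetric]
    by (simp add: free_ext_def sum.distrib sum_subtractf bscal_sum bscal_sum_left)
  also have "\<dots> \<in> W"
  proof -
    have "w z \<in> W" for z unfolding w_def using hcomp_bmul[OF sA fA] .
    then show ?thesis unfolding inv_alpha bscal_zero diff_zero using inv_pairing inv_pi
      by (intro W_diff W_add W_bscal W_sum) auto
  qed
  finally have "free_ext pairing (fsmul n s f) \<in> W" .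
  moreover have "free_ext dalpha (fsmul n s f) = aug s * free_ext dalpha f"
    unfolding left_additive.free_ext_fsmul[OF dalpha_additive fin]
    by (simp add: free_ext_def dalpha_def aug_bmul sum_distrib_left mult.assoc)
  moreover have "free_ext dpi (fsmul n s f) = bscal (aug s) (free_ext dpi f)"
    unfolding left_additive.free_ext_fsmul[OF dpi_additive fin]
    by (simp add: free_ext_def dpi_def aug_bmul bscal_sum bscal_bscal)
  moreover have "finite (supp (fsmul n s f))" using fin supp_fsmul[of n s f] finite_subset by blast
  moreover have "fsmul n s f z \<in> A" for z using fA sA by (simp add: fsmul_def A_mul)
  ultimately show ?thesis using inv_alpha inv_pi by (simp add: pairing_inv_def W_bscal)
qed

lemma pairing_inv_additive:
  assumes "a \<in> A" "c \<in> A"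
  shows "pairing_inv (fsub (gen r n (badd a c)) (fadd (gen r n a) (gen r n c)))"
proof -
  have fin: "finite (supp (gen r n a + gen r n c))"
    by (rule finite_subset[OF supp_add]) (simp add: finite_supp_gen)
  have ext: "free_ext G (gen r n (a + c) - (gen r n a + gen r n c))
      = G (bone r n) (a + c) - (G (bone r n) a + G (bone r n) c)"
    if "left_additive G" for G :: "'a elt \<Rightarrow> 'a elt \<Rightarrow> 'b::ab_group_add"
    by (simp add: left_additive.free_ext_diff[OF that finite_supp_gen fin]
        left_additive.free_ext_add[OF that finite_supp_gen finite_supp_gen]
        left_additive.free_ext_gen[OF that])
  have "finite (supp (gen r n (a + c) - (gen r n a + gen r n c)))"
    by (rule finite_subset[OF supp_diff]) (simp add: finite_supp_gen fin)
  then show ?thesis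
    using ext[OF dalpha_additive] ext[OF dpi_additive] ext[OF pairing_additive]
    by (simp add: pairing_inv_def fsub_eq fadd_eq badd_eq dalpha_def dpi_def pairing_def aug_bone
        xcoeff_add hcomp_add xcoeff_bone hcomp_q_bone W_0 A_diff A_add gen_A)
qed

lemma pairing_inv_leibniz:
  assumes aA: "a \<in> A" and cA: "c \<in> A"
  shows "pairing_inv (fsub (gen r n (bmul n a c)) (fadd (fsmul n a (gen r n c)) (fsmul n c (gen r n a))))"
proof -
  let ?f = "gen r n (bmul n a c)" and ?g = "fsmul n a (gen r n c)" and ?h = "fsmul n c (gen r n a)"
  have fin: "finite (supp (?g + ?h))"
    by (rule finite_subset[OF supp_add]) (simp add: finite_supp_fsmul_gen)
  have ext: "free_ext G (?f - (?g + ?h)) = G (bone r n) (bmul n a c) - (G a c + G c a)"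
    if "left_additive G" for G :: "'a elt \<Rightarrow> 'a elt \<Rightarrow> 'b::ab_group_add"
    using aA cA A_Bset
    by (simp add: left_additive.free_ext_diff[OF that finite_supp_gen fin]
        left_additive.free_ext_add[OF that finite_supp_fsmul_gen finite_supp_fsmul_gen]
        left_additive.free_ext_gen[OF that] left_additive.free_ext_fsmul_gen[OF that]
        bmul_bone_right)
  have "finite (supp (?f - (?g + ?h)))"
    by (rule finite_subset[OF supp_diff]) (simp add: finite_supp_gen fin)
  moreover have "(?f - (?g + ?h)) z \<in> A" for z
    using aA cA by (simp add: fsmul_def A_diff A_add A_mul gen_A)
  moreover have "free_ext dalpha (?f - (?g + ?h)) = 0"
    unfolding ext[OF dalpha_additive] dalpha_def aug_bone xcoeff_bmul[OF aA cA] by simp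
  moreover have "free_ext dpi (?f - (?g + ?h)) \<in> W"
  proof -
    have "free_ext dpi (?f - (?g + ?h))
        = hcomp d q (bmul n a c) - bscal (aug a) (hcomp d q c) - bscal (aug c) (hcomp d q a)"
      unfolding ext[OF dpi_additive] by (simp add: dpi_def aug_bone)
    then show ?thesis using hcomp_bmul[OF aA cA] by simp
  qed
  moreover have "free_ext pairing (?f - (?g + ?h)) = 0"
    unfolding ext[OF pairing_additive] by (simp add: pairing_def xcoeff_bone hcomp_q_bone)
  ultimately show ?thesis using W_0 unfolding pairing_inv_def fsub_eq fadd_eq by simp
qed

lemma pairing_inv_const: "pairing_inv (gen r n (bscal l (bone r n)))"
  using left_additive.free_ext_gen[OF dalpha_additive] left_additive.free_ext_gen[OF dpi_additive]
    left_additive.free_ext_gen[OF pairing_additive] finite_supp_gen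
  by (simp add: pairing_inv_def dalpha_def dpi_def pairing_def xcoeff_bscal xcoeff_bone hcomp_bscal
      hcomp_q_bone W_0 gen_A)

lemma krel_pairing_inv: "f \<in> krel r n A \<Longrightarrow> pairing_inv f"
  by (induction rule: krel.induct)
    (auto intro: pairing_inv_zero pairing_inv_add pairing_inv_fsmul pairing_inv_additive
      pairing_inv_leibniz pairing_inv_const)

end

subsection \<open>Computations in Omega_B\<close>

declare plus_fun_apply [simp del] zero_fun_apply [simp del] minus_apply [simp del]
  uminus_apply [simp del]
lemmas fun_apply_simps = plus_fun_apply zero_fun_apply minus_apply uminus_apply

lemma fsmul_assoc: "fsmul n s (fsmul n t g) = fsmul n (bmul n s t) g"
  by (simp add: fsmul_def bmul_assoc)
lemma fsmul_add_right: "fsmul n s (f + g) = fsmul n s f + fsmul n s g"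
  by (simp add: fsmul_def fun_eq_iff bmul_add_right fun_apply_simps)
lemma fsmul_diff_right: "fsmul n s (f - g) = fsmul n s f - fsmul n s g"
  by (simp add: fsmul_def fun_eq_iff bmul_diff_right fun_apply_simps)
lemma fsmul_add_left: "fsmul n (s + t) g = fsmul n s g + fsmul n t g"
  by (simp add: fsmul_def fun_eq_iff bmul_add_left fun_apply_simps)
lemma fsmul_diff_left: "fsmul n (s - t) g = fsmul n s g - fsmul n t g"
  by (simp add: fsmul_def fun_eq_iff bmul_diff_left fun_apply_simps)
lemma fsmul_zero_left: "fsmul n 0 g = 0"
  by (simp add: fsmul_def fun_eq_iff fun_apply_simps)
lemma fsmul_sum_right: "fsmul n s (\<Sum>i\<in>I. F i) = (\<Sum>i\<in>I. fsmul n s (F i))"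
proof (induction I rule: infinite_finite_induct)
  case (insert x F)
  then show ?case by (simp only: sum.insert[OF insert(1,2)] fsmul_add_right insert(3))
qed (simp_all add: fsmul_def fun_eq_iff bmul_def fun_apply_simps)
lemma fsmul_bone: "(\<And>z. g z \<in> Bset r n) \<Longrightarrow> fsmul n (bone r n) g = g"
  by (simp add: fsmul_def fun_eq_iff bmul_bone_left)

lemma gen_Bset: "gen r n c z \<in> Bset r n" by (simp add: gen_def bzero_eq)

lemma fsmul_bone_gen: "fsmul n (bone r n) (gen r n c) = gen r n c"
  by (rule fsmul_bone) (rule gen_Bset)

definition spow :: "(nat \<Rightarrow> nat) \<Rightarrow> nat \<Rightarrow> nat \<Rightarrow> ('k::field) elt" where
  "spow n i k = (\<lambda>j. if j = i then monom 1 k mod monom 1 (n i) else 0)"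

lemma spow_Bset: "i < r \<Longrightarrow> spow n i k \<in> Bset r n"
  by (auto simp: Bset_iff spow_def)

lemma bmul_spow: "bmul n (spow n i k) (spow n i l) = spow n i (k + l)"
  by (auto simp: fun_eq_iff bmul_def spow_def mod_simps mult_monom)

context
  fixes r :: nat and n :: "nat \<Rightarrow> nat"
begin

lemma relB_values: "f \<in> krel r n (Bset r n) \<Longrightarrow> f z \<in> Bset r n"
proof (induction arbitrary: z rule: krel.induct)
  case zero then show ?case by (simp add: bzero_def Bset_iff)
next
  case (add f g) then show ?case by (simp add: fadd_def badd_eq Bset_add)
next
  case (smul s f) then show ?case by (simp add: fsmul_def Bset_bmul)
next
  case (additive a c) then show ?case
    by (simp add: fsub_def fadd_def bsub_eq badd_eq Bset_diff Bset_add gen_Bset)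
next
  case (leibniz a c) then show ?case
    by (simp add: fsub_def fadd_def bsub_eq badd_eq fsmul_def Bset_diff Bset_add gen_Bset Bset_bmul)
next
  case (const l) then show ?case by (simp add: gen_Bset)
qed

lemma relB_zero: "0 \<in> krel r n (Bset r n)"
proof -
  have "(\<lambda>x. bzero) \<in> krel r n (Bset r n)" by (rule krel.zero)
  moreover have "(\<lambda>x. bzero) = (0 :: 'k::field elt \<Rightarrow> 'k elt)"
    by (simp add: fun_eq_iff bzero_def fun_apply_simps)
  ultimately show ?thesis by metis
qed
lemma relB_add: "f \<in> krel r n (Bset r n) \<Longrightarrow> g \<in> krel r n (Bset r n) \<Longrightarrow> f + g \<in> krel r n (Bset r n)"
  using krel.add[of f r n "Bset r n" g] by (simp add: fadd_eq)
lemma relB_fsmul: "s \<in> Bset r n \<Longrightarrow> f \<in> krel r n (Bset r n) \<Longrightarrow> fsmul n s f \<in> krel r n (Bset r n)"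
  by (rule krel.smul)
lemma relB_minus:
  assumes f: "f \<in> krel r n (Bset r n)" shows "- f \<in> krel r n (Bset r n)"
proof -
  have "fsmul n (- bone r n) f = - f"
    using relB_values[OF f]
    by (simp add: fsmul_def fun_eq_iff bmul_minus_left bmul_bone_left fun_apply_simps)
  moreover have "fsmul n (- bone r n) f \<in> krel r n (Bset r n)" using f by (intro relB_fsmul Bset_minus Bset_bone)
  ultimately show ?thesis by simp
qed
lemma relB_diff: "f \<in> krel r n (Bset r n) \<Longrightarrow> g \<in> krel r n (Bset r n) \<Longrightarrow> f - g \<in> krel r n (Bset r n)"
  using relB_add[of f "- g"] relB_minus[of g] by simp
lemma relB_sum: "(\<And>i. i \<in> I \<Longrightarrow> F i \<in> krel r n (Bset r n)) \<Longrightarrow> (\<Sum>i\<in>I. F i) \<in> krel r n (Bset r n)"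
  by (induction I rule: infinite_finite_induct) (auto intro: relB_add relB_zero)

lemma relB_additive:
  "a \<in> Bset r n \<Longrightarrow> c \<in> Bset r n \<Longrightarrow> gen r n (a + c) - (gen r n a + gen r n c) \<in> krel r n (Bset r n)"
  using krel.additive[where S = "Bset r n" and r = r and n = n] by (simp add: fsub_eq fadd_eq badd_eq)
lemma relB_leibniz: "a \<in> Bset r n \<Longrightarrow> c \<in> Bset r n \<Longrightarrow>
    gen r n (bmul n a c) - (fsmul n a (gen r n c) + fsmul n c (gen r n a)) \<in> krel r n (Bset r n)"
  using krel.leibniz[where S = "Bset r n" and r = r and n = n] by (simp add: fsub_eq fadd_eq)
lemma relB_const: "gen r n (bscal l (bone r n)) \<in> krel r n (Bset r n)"
  by (rule krel.const)
lemma gen_zero_relB: "gen r n 0 \<in> krel r n (Bset r n)"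
  using relB_const[of 0] by simp
lemma gen_bone_relB: "gen r n (bone r n) \<in> krel r n (Bset r n)"
  using relB_const[of 1] by simp

lemma gen_bscal_relB:
  assumes w: "w \<in> Bset r n"
  shows "gen r n (bscal c w) - fsmul n (bscal c (bone r n)) (gen r n w) \<in> krel r n (Bset r n)"
proof -
  let ?c = "bscal c (bone r n)"
  have "gen r n (bscal c w) - fsmul n ?c (gen r n w)
     = (gen r n (bmul n ?c w) - (fsmul n ?c (gen r n w) + fsmul n w (gen r n ?c)))
       + fsmul n w (gen r n ?c)"
    using w by (simp add: bscal_eq_bmul_bone[symmetric])
  also have "\<dots> \<in> krel r n (Bset r n)"
    using w by (intro relB_add relB_leibniz relB_fsmul relB_const Bset_bscal Bset_bone)
  finally show ?thesis .
qed

lemma gen_sum_relB: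
  "(\<And>i. i \<in> I \<Longrightarrow> w i \<in> Bset r n) \<Longrightarrow> gen r n (\<Sum>i\<in>I. w i) - (\<Sum>i\<in>I. gen r n (w i)) \<in> krel r n (Bset r n)"
proof (induction I rule: infinite_finite_induct)
  case (infinite I) then show ?case using gen_zero_relB by simp
next
  case empty then show ?case using gen_zero_relB by simp
next
  case (insert x F)
  have wx: "w x \<in> Bset r n" and wF: "(\<Sum>i\<in>F. w i) \<in> Bset r n"
    using insert by (auto intro: Bset_sum)
  have "gen r n (\<Sum>i\<in>insert x F. w i) - (\<Sum>i\<in>insert x F. gen r n (w i))
     = (gen r n (w x + (\<Sum>i\<in>F. w i)) - (gen r n (w x) + gen r n (\<Sum>i\<in>F. w i)))
       + (gen r n (\<Sum>i\<in>F. w i) - (\<Sum>i\<in>F. gen r n (w i)))"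
    using insert(1,2) by (simp add: algebra_simps)
  also have "\<dots> \<in> krel r n (Bset r n)" using insert wx wF by (intro relB_add relB_additive) auto
  finally show ?case .
qed

text \<open>1 - 2e is a unit squaring to 1, and the Leibniz rule gives (1 - 2e) de = 0.\<close>

lemma gen_idempotent_relB:
  assumes eB: "e \<in> Bset r n" and ee: "bmul n e e = e"
  shows "gen r n e \<in> krel r n (Bset r n)"
proof -
  let ?f = "bone r n - (e + e)"
  have "fsmul n ?f (gen r n e) = gen r n (bmul n e e) - (fsmul n e (gen r n e) + fsmul n e (gen r n e))"
    unfolding fsmul_diff_left fsmul_add_left fsmul_bone_gen ee ..
  hence "fsmul n ?f (gen r n e) \<in> krel r n (Bset r n)" using relB_leibniz[OF eB eB] by simp
  have ff: "bmul n ?f ?f = bone r n"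
    unfolding bmul_diff_left bmul_diff_right bmul_add_left bmul_add_right bmul_bone_left[OF eB]
      bmul_bone_right[OF eB] bmul_bone_left[OF Bset_bone] ee
    by (simp add: algebra_simps)
  have "?f \<in> Bset r n" using eB by (intro Bset_diff Bset_bone Bset_add)
  then have "fsmul n ?f (fsmul n ?f (gen r n e)) \<in> krel r n (Bset r n)"
    using \<open>fsmul n ?f (gen r n e) \<in> _\<close> by (rule relB_fsmul)
  then show ?thesis unfolding fsmul_assoc ff fsmul_bone_gen .
qed

lemma fsmul_compl_gen_spow_1_relB:
  assumes i: "i < r"
  shows "fsmul n (bone r n - spow n i 0) (gen r n (spow n i (Suc 0) :: 'k::field elt))
    \<in> krel r n (Bset r n)"
proof -
  let ?e = "spow n i 0 :: 'k::field elt" and ?t = "spow n i (Suc 0) :: 'k elt" let ?g = "bone r n - ?e"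
  have eB: "?e \<in> Bset r n" and tB: "?t \<in> Bset r n" using i by (auto intro: spow_Bset)
  have gB: "?g \<in> Bset r n" using eB by (intro Bset_diff Bset_bone)
  have g_t: "bmul n ?g ?t = 0"
    unfolding bmul_diff_left bmul_bone_left[OF tB] bmul_spow[of n i 0 "Suc 0", simplified] by simp
  have "gen r n ?g = gen r n (bone r n) - gen r n ?e - (gen r n (?g + ?e) - (gen r n ?g + gen r n ?e))"
    by simp
  hence "gen r n ?g \<in> krel r n (Bset r n)"
    using relB_additive[OF gB eB] gen_bone_relB gen_idempotent_relB[OF eB] bmul_spow[of n i 0 0]
    by (metis relB_diff add_0)
  hence "fsmul n ?t (gen r n ?g) \<in> krel r n (Bset r n)" using tB by (intro relB_fsmul)
  moreover have "fsmul n ?g (gen r n ?t) = gen r n (bmul n ?g ?t)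
     - (gen r n (bmul n ?g ?t) - (fsmul n ?g (gen r n ?t) + fsmul n ?t (gen r n ?g)))
     - fsmul n ?t (gen r n ?g)" by (simp add: algebra_simps)
  ultimately show ?thesis using relB_leibniz[OF gB tB] gen_zero_relB g_t by (metis relB_diff)
qed

lemma gen_spow_Suc_relB:
  assumes i: "i < r"
  shows "gen r n (spow n i (Suc k) :: 'k::field elt) - fsmul n (bscal (of_nat (Suc k)) (spow n i k)) (gen r n (spow n i (Suc 0)))
    \<in> krel r n (Bset r n)"
proof (induction k)
  case 0
  show ?case using fsmul_compl_gen_spow_1_relB[OF i] unfolding fsmul_diff_left fsmul_bone_gen
    by simp
next
  case (Suc k)
  let ?t = "spow n i (Suc 0) :: 'k::field elt" and ?u = "spow n i (Suc k) :: 'k elt"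
    and ?v = "spow n i k :: 'k elt"
  have tB: "?t \<in> Bset r n" and uB: "?u \<in> Bset r n" using i by (auto intro: spow_Bset)
  have ut: "bmul n ?u ?t = spow n i (Suc (Suc k))" by (simp add: bmul_spow)
  have tv: "bmul n ?t (bscal (of_nat (Suc k)) ?v) = bscal (of_nat (Suc k)) ?u"
    by (simp add: bmul_bscal_right bmul_spow)
  have sk: "bscal (of_nat (Suc (Suc k))) ?u = ?u + bscal (of_nat (Suc k)) ?u"
    using bscal_add_left[of 1 "of_nat (Suc k)" ?u] by (simp add: add.commute)
  have "gen r n (spow n i (Suc (Suc k))) - fsmul n (bscal (of_nat (Suc (Suc k))) ?u) (gen r n ?t)
     = (gen r n (bmul n ?u ?t) - (fsmul n ?u (gen r n ?t) + fsmul n ?t (gen r n ?u)))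
       + fsmul n ?t (gen r n ?u - fsmul n (bscal (of_nat (Suc k)) ?v) (gen r n ?t))"
    unfolding ut sk fsmul_add_left fsmul_diff_right fsmul_assoc tv by (simp add: algebra_simps)
  also have "\<dots> \<in> krel r n (Bset r n)" using relB_leibniz[OF uB tB] relB_fsmul[OF tB Suc.IH] by (rule relB_add)
  finally show ?case .
qed

text \<open>For k = 0 the right-hand side vanishes, so the truncated k - 1 is harmless.\<close>

lemma gen_bscal_spow_relB:
  assumes i: "i < r"
  shows "gen r n (bscal a (spow n i k))
    - fsmul n (bscal (a * of_nat k) (spow n i (k - 1))) (gen r n (spow n i (Suc 0))) \<in> krel r n (Bset r n)"
proof (cases k)
  case 0
  have eB: "spow n i 0 \<in> Bset r n" using i by (rule spow_Bset)
  have "fsmul n (bscal a (bone r n)) (gen r n (spow n i 0)) \<in> krel r n (Bset r n)"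
    using gen_idempotent_relB[OF eB] bmul_spow[of n i 0 0] by (intro relB_fsmul Bset_bscal Bset_bone) simp_all
  hence "gen r n (bscal a (spow n i 0)) \<in> krel r n (Bset r n)"
    using gen_bscal_relB[OF eB, of a] by (metis relB_add diff_add_cancel)
  then show ?thesis using 0 by (simp add: fsmul_zero_left)
next
  case (Suc k')
  let ?a = "bscal a (bone r n)" and ?u = "spow n i (Suc k')" and ?v = "spow n i k'"
  have uB: "?u \<in> Bset r n" and vB: "?v \<in> Bset r n" using i by (auto intro: spow_Bset)
  have m: "bmul n ?a (bscal (of_nat (Suc k')) ?v) = bscal (a * of_nat (Suc k')) ?v"
    unfolding bmul_bscal_left bmul_bscal_right bmul_bone_left[OF vB] bscal_bscal
    by (simp add: mult.commute)
  have "gen r n (bscal a ?u) - fsmul n (bscal (a * of_nat (Suc k')) ?v) (gen r n (spow n i (Suc 0)))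
     = (gen r n (bscal a ?u) - fsmul n ?a (gen r n ?u))
       + fsmul n ?a (gen r n ?u - fsmul n (bscal (of_nat (Suc k')) ?v) (gen r n (spow n i (Suc 0))))"
    unfolding fsmul_diff_right fsmul_assoc m by simp
  also have "\<dots> \<in> krel r n (Bset r n)"
    using gen_bscal_relB[OF uB] gen_spow_Suc_relB[OF i, of k']
    by (intro relB_add relB_fsmul Bset_bscal Bset_bone)
  finally show ?thesis unfolding Suc diff_Suc_1 .
qed

end

context graded_alg begin

lemma homog_component_monom:
  assumes h: "homog r n d m h" and i: "i < r"
  shows "h i = monom (coeff (h i) (m div d i)) (m div d i)"
proof (rule poly_eqI)
  fix l
  show "coeff (h i) l = coeff (monom (coeff (h i) (m div d i)) (m div d i)) l"
  proof (cases "coeff (h i) l = 0")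
    case True then show ?thesis by (auto simp: coeff_monom)
  next
    case False
    hence "l * d i = m" using h i by (auto simp: homog_def)
    hence "m div d i = l" using d_pos[OF i] by auto
    then show ?thesis by simp
  qed
qed

lemma homog_eq_sum_spow:
  assumes h: "homog r n d m h"
  shows "h = (\<Sum>i<r. bscal (coeff (h i) (m div d i)) (spow n i (m div d i)))"
proof (rule ext)
  fix j
  have hB: "h \<in> Bset r n" using h by (rule homog_Bset)
  have smult_if: "\<And>c P Q. smult c (if P then Q else 0) = (if P then smult c Q else 0)" by simp
  have "(\<Sum>i<r. bscal (coeff (h i) (m div d i)) (spow n i (m div d i))) j
      = (\<Sum>i<r. if j = i then smult (coeff (h i) (m div d i)) (monom 1 (m div d i) mod monom 1 (n i))
          else 0)"
    by (simp add: sum_apply bscal_def spow_def smult_if)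
  also have "\<dots> = (if j < r then smult (coeff (h j) (m div d j)) (monom 1 (m div d j) mod monom 1 (n j))
      else 0)"
    by (simp add: sum.delta)
  also have "\<dots> = h j"
  proof (cases "j < r")
    case True
    have "smult (coeff (h j) (m div d j)) (monom 1 (m div d j) mod monom 1 (n j))
        = monom (coeff (h j) (m div d j)) (m div d j) mod monom 1 (n j)"
      unfolding mod_smult_left[symmetric] smult_monom by simp
    also have "\<dots> = h j mod monom 1 (n j)" using homog_component_monom[OF h True] by simp
    also have "\<dots> = h j" using hB True by (simp add: Bset_iff)
    finally show ?thesis using True by simp
  next
    case False then show ?thesis using hB by (simp add: Bset_iff)
  qed
  finally show "h j = (\<Sum>i<r. bscal (coeff (h i) (m div d i)) (spow n i (m div d i))) j" by simp
qed

lemma bmul_homog_spow: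
  assumes h: "homog r n d m h" and i: "i < r"
  shows "bmul n h (spow n i k) = bscal (coeff (h i) (m div d i)) (spow n i (m div d i + k))"
proof (rule ext)
  fix j
  show "bmul n h (spow n i k) j = bscal (coeff (h i) (m div d i)) (spow n i (m div d i + k)) j"
  proof (cases "j = i")
    case True
    have "bmul n h (spow n i k) j = (h i * monom 1 k) mod monom 1 (n i)"
      using True by (simp add: bmul_def spow_def mod_simps)
    also have "\<dots> = (monom (coeff (h i) (m div d i)) (m div d i) * monom 1 k) mod monom 1 (n i)"
      using homog_component_monom[OF h i] by simp
    also have "\<dots> = bscal (coeff (h i) (m div d i)) (spow n i (m div d i + k)) j"
      using True by (simp add: bscal_def spow_def mod_smult_left[symmetric] mult_monom smult_monom)
    finally show ?thesis .
  qed (simp add: bmul_def spow_def bscal_def)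
qed

text \<open>The expansion of dh in the ds_i for h homogeneous of degree m: the monomial c s_i^j of h
  has j = m div d i and contributes c j s_i^(j-1) ds_i.\<close>

definition dexp :: "nat \<Rightarrow> 'k elt \<Rightarrow> ('k elt \<Rightarrow> 'k elt)" where
  "dexp m h = (\<Sum>i<r. fsmul n (bscal (coeff (h i) (m div d i) * of_nat (m div d i))
      (spow n i (m div d i - 1))) (gen r n (spow n i (Suc 0))))"

lemma gen_homog_relB:
  assumes h: "homog r n d m h"
  shows "gen r n h - dexp m h \<in> krel r n (Bset r n)"
proof -
  let ?w = "\<lambda>i. bscal (coeff (h i) (m div d i)) (spow n i (m div d i))"
  have "gen r n h - dexp m h = (gen r n (\<Sum>i<r. ?w i) - (\<Sum>i<r. gen r n (?w i)))
      + (\<Sum>i<r. gen r n (?w i) - fsmul n (bscal (coeff (h i) (m div d i) * of_nat (m div d i))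
          (spow n i (m div d i - 1))) (gen r n (spow n i (Suc 0))))"
    unfolding dexp_def by (subst homog_eq_sum_spow[OF h]) (simp add: sum_subtractf)
  also have "\<dots> \<in> krel r n (Bset r n)"
    by (intro relB_add gen_sum_relB relB_sum gen_bscal_spow_relB Bset_bscal spow_Bset) auto
  finally show ?thesis .
qed

text \<open>Euler's identity: a monomial c s_i^j of a homogeneous element of degree m satisfies
  j d_i = m, so m' j = m j' for the exponents of two homogeneous elements of degrees m, m'.\<close>

lemma euler_coeff_eq:
  fixes h h' :: "'k elt"
  assumes h: "homog r n d m h" "0 < m" and h': "homog r n d m' h'" "0 < m'" and i: "i < r"
  defines "j \<equiv> m div d i" and "j' \<equiv> m' div d i"
  shows "bscal (of_nat m' * (coeff (h i) j * of_nat j) * coeff (h' i) j') (spow n i (j' + (j - 1)))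
       = bscal (of_nat m * (coeff (h' i) j' * of_nat j') * coeff (h i) j) (spow n i (j + (j' - 1)))"
proof (cases "coeff (h i) j = 0 \<or> coeff (h' i) j' = 0")
  case True then show ?thesis by auto
next
  case False
  hence jm: "j * d i = m" and jm': "j' * d i = m'"
    using h h' i by (auto simp: homog_def j_def j'_def)
  have "j \<noteq> 0" "j' \<noteq> 0" using jm jm' h(2) h'(2) by auto
  hence idx: "j' + (j - 1) = j + (j' - 1)" by simp
  have "m' * j = m * j'" using jm jm' by (metis mult.assoc mult.commute)
  hence "(of_nat m' * of_nat j :: 'k) = of_nat m * of_nat j'" by (metis of_nat_mult)
  hence "(of_nat m' * (coeff (h i) j * of_nat j) * coeff (h' i) j' :: 'k)
       = of_nat m * (coeff (h' i) j' * of_nat j') * coeff (h i) j"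
    by (simp add: ac_simps)
  then show ?thesis unfolding idx by (rule arg_cong)
qed

lemma fsmul_dexp_swap:
  fixes h h' :: "'k elt"
  assumes h: "homog r n d m h" "0 < m" and h': "homog r n d m' h'" "0 < m'"
  shows "fsmul n (bscal (of_nat m') h') (dexp m h) = fsmul n (bscal (of_nat m) h) (dexp m' h')"
proof -
  have summand: "bmul n (bscal (of_nat m') h') (bscal (coeff (h i) (m div d i) * of_nat (m div d i))
      (spow n i (m div d i - 1)))
    = bscal (of_nat m' * (coeff (h i) (m div d i) * of_nat (m div d i)) * coeff (h' i) (m' div d i))
      (spow n i (m' div d i + (m div d i - 1)))"
    if "homog r n d m h" "homog r n d m' h'" "i < r" for m m' and h h' :: "'k elt" and i
    unfolding bmul_bscal_left bmul_bscal_right bmul_homog_spow[OF that(2,3)] bscal_bscal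
    by (simp add: ac_simps)
  show ?thesis
    unfolding dexp_def fsmul_sum_right fsmul_assoc
    using summand[OF h(1) h'(1)] summand[OF h'(1) h(1)] euler_coeff_eq[OF h h'] by simp
qed

end

subsection \<open>The element omega\<close>

context minimal_pair begin

definition omega :: "'a elt \<Rightarrow> 'a elt" where
  "omega = fsub (fsmul n (bscal (of_nat q) y) (gen r n x)) (fsmul n (bscal (of_nat p) x) (gen r n y))"

lemma omega_relB: "omega \<in> krel r n (Bset r n)"
proof -
  have xB: "bscal (of_nat p) x \<in> Bset r n" and yB: "bscal (of_nat q) y \<in> Bset r n"
    using xA yA A_Bset by (auto intro: Bset_bscal)
  have "omega = fsmul n (bscal (of_nat q) y) (gen r n x - dexp p x)
      - fsmul n (bscal (of_nat p) x) (gen r n y - dexp q y)"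
    unfolding omega_def fsub_eq fsmul_diff_right
      fsmul_dexp_swap[OF x_homog p_pos y_homog q_pos] by simp
  also have "\<dots> \<in> krel r n (Bset r n)"
    using relB_fsmul[OF yB gen_homog_relB[OF x_homog]] relB_fsmul[OF xB gen_homog_relB[OF y_homog]]
    by (rule relB_diff)
  finally show ?thesis .
qed

lemma omega_apply:
  "omega z = bmul n (bscal (of_nat q) y) (gen r n x z) - bmul n (bscal (of_nat p) x) (gen r n y z)"
  by (simp add: omega_def fsub_def bsub_eq fsmul_def)

lemma omega_free_mod: "omega \<in> free_mod A"
proof -
  have vanish: "omega z = bzero" if "z \<noteq> x" "z \<noteq> y" for z
    using that unfolding omega_apply by (simp add: gen_def bzero_eq)
  have "\<forall>z. omega z \<in> A"
    unfolding omega_apply using xA yA by (auto intro!: A_diff A_mul A_scal gen_A)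
  moreover have "\<forall>z. z \<notin> A \<longrightarrow> omega z = bzero" by (metis vanish xA yA)
  moreover have "{z. omega z \<noteq> bzero} \<subseteq> {x, y}" using vanish by blast
  then have "finite {z. omega z \<noteq> bzero}" by (rule finite_subset) simp
  ultimately show ?thesis by (simp add: free_mod_def)
qed

lemma omega_not_relA: "omega \<notin> krel r n A"
proof
  assume "omega \<in> krel r n A"
  hence inv: "free_ext pairing omega \<in> W" using krel_pairing_inv by (simp add: pairing_inv_def)
  have xB: "x \<in> Bset r n" and yB: "y \<in> Bset r n" using xA yA A_Bset by auto
  have hx: "hcomp d q x \<in> W" unfolding W_def using multiples_self[OF xA] by blast
  have hy: "hcomp d q y = y" using hcomp_homog[OF y_homog d_pos_all, of q] by simp
  have "free_ext pairing omega = pairing (bscal (of_nat q) y) x - pairing (bscal (of_nat p) x) y"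
    unfolding omega_def fsub_eq
      left_additive.free_ext_diff[OF pairing_additive finite_supp_fsmul_gen finite_supp_fsmul_gen]
      left_additive.free_ext_fsmul_gen[OF pairing_additive]
      bmul_bone_right[OF Bset_bscal[OF xB]] bmul_bone_right[OF Bset_bscal[OF yB]] ..
  moreover have "pairing (bscal (of_nat q) y) x
      = bscal (of_nat q * xcoeff y) (hcomp d q x) - bscal (of_nat q) y"
    by (simp add: pairing_def xcoeff_bscal xcoeff_x hcomp_bscal hy)
  moreover have "pairing (bscal (of_nat p) x) y
      = bscal (of_nat p) y - bscal (xcoeff y) (bscal (of_nat p) (hcomp d q x))"
    by (simp add: pairing_def xcoeff_bscal xcoeff_x hcomp_bscal hy)
  ultimately have "bscal (of_nat p + of_nat q) y = bscal (of_nat q * xcoeff y) (hcomp d q x)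
      + bscal (xcoeff y) (bscal (of_nat p) (hcomp d q x)) - free_ext pairing omega"
    by (simp add: bscal_add_left algebra_simps)
  also have "\<dots> \<in> W" using inv hx by (intro W_diff W_add W_bscal)
  finally have "bscal (1 / (of_nat p + of_nat q)) (bscal (of_nat p + of_nat q) y) \<in> W"
    by (rule W_bscal)
  moreover have "(of_nat p + of_nat q :: 'a) \<noteq> 0"
    using p_pos of_nat_eq_0_iff[of "p + q"] by (simp del: of_nat_eq_0_iff)
  ultimately show False using y_notin_W by (simp add: bscal_bscal)
qed

lemma omega_witnesses_not_injective: "omega_map_not_injective r n A"
  unfolding omega_map_not_injective_def using omega_free_mod omega_not_relA omega_relB by blast

end

context graded_alg begin

lemma least_degree_homog:
  assumes "\<exists>m h. 0 < m \<and> h \<in> A \<and> homog r n d m h \<and> P h"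
  obtains m h where "0 < m" "h \<in> A" "homog r n d m h" "P h"
    "\<And>m' h'. 0 < m' \<Longrightarrow> m' < m \<Longrightarrow> h' \<in> A \<Longrightarrow> homog r n d m' h' \<Longrightarrow> \<not> P h'"
proof -
  define M where "M = {m. 0 < m \<and> (\<exists>h\<in>A. homog r n d m h \<and> P h)}"
  obtain m0 where "m0 \<in> M" using assms unfolding M_def by blast
  then have "Least (\<lambda>m. m \<in> M) \<in> M" by (rule LeastI)
  then obtain h where "0 < Least (\<lambda>m. m \<in> M)" "h \<in> A" "homog r n d (Least (\<lambda>m. m \<in> M)) h" "P h"
    unfolding M_def by blast
  moreover have "\<not> P h'" if "0 < m'" "m' < Least (\<lambda>m. m \<in> M)" "h' \<in> A" "homog r n d m' h'"
    for m' h'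
  proof
    assume "P h'"
    then have "m' \<in> M" using that(1,3,4) unfolding M_def by blast
    then show False using not_less_Least[OF that(2)] by blast
  qed
  ultimately show ?thesis using that by blast
qed

end

theorem proposition1p5:
  fixes r :: nat and n d :: "nat \<Rightarrow> nat" and A :: "('k::field_char_0) elt set"
  assumes "\<forall>i<r. 1 \<le> n i"
    and "\<forall>i<r. 0 < d i"
    and "graded_subalg r n d A"
    and "\<not> principal_ideal_alg n A"
  shows "omega_map_not_injective r n A"
proof -
  interpret graded_alg r n d A using assms(1-3) by unfold_locales auto
  have exists_not_multiple:
    "\<exists>m h. 0 < m \<and> h \<in> A \<and> homog r n d m h \<and> h \<notin> multiples x"
    if "x \<in> A" "deg_ge r d 1 x" for x
    using principal_ideal_alg_if_homog_multiples[OF that] assms(4) by meson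
  obtain p x where p: "0 < p" "x \<in> A" "homog r n d p x" "x \<notin> multiples 0"
    and p_min: "\<And>m h. 0 < m \<Longrightarrow> m < p \<Longrightarrow> h \<in> A \<Longrightarrow> homog r n d m h \<Longrightarrow> h \<in> multiples 0"
    using least_degree_homog[OF exists_not_multiple[OF A_zero deg_ge_zero]] by metis
  have "deg_ge r d 1 x" using deg_ge_homog[OF p(3)] p(1) by (auto intro: deg_ge_mono)
  then obtain q y where q: "0 < q" "y \<in> A" "homog r n d q y" "y \<notin> multiples x"
    and q_min: "\<And>m h. 0 < m \<Longrightarrow> m < q \<Longrightarrow> h \<in> A \<Longrightarrow> homog r n d m h \<Longrightarrow> h \<in> multiples x"
    using least_degree_homog[OF exists_not_multiple[OF p(2)]] by metis
  interpret minimal_pair r n d A p q x y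
    using p p_min q q_min multiples_zero by unfold_locales auto
  show ?thesis by (rule omega_witnesses_not_injective)
qed

end
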